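(* Let $\mathcal{A}$ be a $C^{\ast}$-algebra faithfully and non-degenerately represented on $\mathcal{H}$, let $(e_i)_{i\in\mathcal{I}}$ be a norm-bounded approximate unit for $\mathcal{A}$ indexed by a directed set $\mathcal{I}$, and let $\mathcal{U}$ be a cofinal ultrafilter over $\mathcal{I}$. Then $\mathcal{A}^{s\mathcal{U}}/J$ is the multiplier algebra of $\mathcal{A}$: $\mathcal{A}$ (embedded via constant families) is an essential ideal of $\mathcal{A}^{s\mathcal{U}}/J$, and for every $C^{\ast}$-algebra $\mathcal{B}$ containing $\mathcal{A}$ as an ideal there is a unique $\ast$-homomorphism $\varphi:\mathcal{B}\to\mathcal{A}^{s\mathcal{U}}/J$ with $\varphi(a)=a$ for all $a\in\mathcal{A}$ (namely $\varphi(b)$ is the class of $(be_i)_{i\in\mathcal{I}}$).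
   Context: An ultrafilter $\mathcal{U}$ over a directed set $\mathcal{I}$ is cofinal if $\{i\in\mathcal{I}: i\ge i_0\}\in\mathcal{U}$ for every $i_0\in\mathcal{I}$. $\mathcal{A}^{\mathcal{U}}$ is the quotient of the bounded families $\prod_{\mathcal{I}}\mathcal{A}$ by those with $\lim_{\mathcal{U}}\|a_i\|=0$, normed by $\lim_{\mathcal{U}}\|a_i\|$. A family $(a_i)$ is $\mathcal{U}$-strict convergent to $a_{\mathcal{U}}\in B(\mathcal{H})$ if for every $x\in\mathcal{A}$ and $\varepsilon>0$, $\{i:\|a_ix-a_{\mathcal{U}}x\|<\varepsilon,\ \|xa_i-xa_{\mathcal{U}}\|<\varepsilon\}\in\mathcal{U}$. $\mathcal{A}^{s\mathcal{U}}\subset\mathcal{A}^{\mathcal{U}}$ is the $C^{\ast}$-subalgebra of classes that are $\mathcal{U}$-strict convergent to some operator in $B(\mathcal{H})$, and $J$ is its closed ideal of classes $\mathcal{U}$-strict convergent to $0$. *)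

theory Defs
  imports "HOL-Analysis.Analysis"
begin

class complex_vector = real_vector +
  fixes scaleC :: "complex \<Rightarrow> 'a \<Rightarrow> 'a"
  assumes scaleC_add_right: "scaleC a (x + y) = scaleC a x + scaleC a y"
    and scaleC_add_left: "scaleC (a + b) x = scaleC a x + scaleC b x"
    and scaleC_scaleC: "scaleC a (scaleC b x) = scaleC (a * b) x"
    and scaleC_one: "scaleC 1 x = x"
    and scaleR_scaleC: "scaleR r x = scaleC (complex_of_real r) x"

class complex_normed_vector = complex_vector + real_normed_vector +
  assumes norm_scaleC: "norm (scaleC a x) = cmod a * norm x"

class complex_inner = complex_normed_vector +
  fixes cinner :: "'a \<Rightarrow> 'a \<Rightarrow> complex"
  assumes cinner_commute: "cinner x y = cnj (cinner y x)"
    and cinner_add_left: "cinner (x + y) z = cinner x z + cinner y z"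
    and cinner_scaleC_left: "cinner (scaleC c x) y = cnj c * cinner x y"
    and cinner_norm: "cinner x x = complex_of_real ((norm x)\<^sup>2)"

class chilbert_space = complex_inner + complete_space

class cstar_algebra = complex_normed_vector + real_normed_algebra + complete_space +
  fixes cstar :: "'a \<Rightarrow> 'a"
  assumes scaleC_mult_left: "scaleC c x * y = scaleC c (x * y)"
    and scaleC_mult_right: "x * scaleC c y = scaleC c (x * y)"
    and cstar_cstar: "cstar (cstar x) = x"
    and cstar_add: "cstar (x + y) = cstar x + cstar y"
    and cstar_scaleC: "cstar (scaleC c x) = scaleC (cnj c) (cstar x)"
    and cstar_mult: "cstar (x * y) = cstar y * cstar x"
    and cstar_identity: "norm (cstar x * x) = norm x * norm x"

definition bop :: "('h::chilbert_space \<Rightarrow> 'h) \<Rightarrow> bool" where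
  "bop T \<longleftrightarrow> bounded_linear T \<and> (\<forall>c x. T (scaleC c x) = scaleC c (T x))"

definition adj :: "('h::chilbert_space \<Rightarrow> 'h) \<Rightarrow> ('h \<Rightarrow> 'h)" where
  "adj T = (THE S. \<forall>x y. cinner (T x) y = cinner x (S y))"

text \<open>Operator norm on B(H) is \<open>onorm\<close>. A concrete C*-algebra of operators
  (i.e. a C*-algebra faithfully represented on H):\<close>
definition cstar_subalg :: "('h::chilbert_space \<Rightarrow> 'h) set \<Rightarrow> bool" where
  "cstar_subalg A \<longleftrightarrow>
     A \<subseteq> Collect bop \<and> (\<lambda>x. 0) \<in> A \<and>
     (\<forall>S\<in>A. \<forall>T\<in>A. (\<lambda>x. S x + T x) \<in> A \<and> S \<circ> T \<in> A) \<and>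
     (\<forall>c. \<forall>T\<in>A. (\<lambda>x. scaleC c (T x)) \<in> A) \<and>
     (\<forall>T\<in>A. adj T \<in> A) \<and>
     (\<forall>T. bop T \<and> (\<forall>\<epsilon>>0. \<exists>S\<in>A. onorm (\<lambda>x. T x - S x) < \<epsilon>) \<longrightarrow> T \<in> A)"

definition nondegenerate :: "('h::chilbert_space \<Rightarrow> 'h) set \<Rightarrow> bool" where
  "nondegenerate A \<longleftrightarrow> closure (span {a x |a x. a \<in> A}) = UNIV"

definition directed :: "('i \<Rightarrow> 'i \<Rightarrow> bool) \<Rightarrow> bool" where
  "directed le \<longleftrightarrow> (\<forall>i. le i i) \<and> (\<forall>i j k. le i j \<longrightarrow> le j k \<longrightarrow> le i k) \<and>
     (\<forall>i j. \<exists>k. le i k \<and> le j k)"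

definition net_filter :: "('i \<Rightarrow> 'i \<Rightarrow> bool) \<Rightarrow> 'i filter" where
  "net_filter le = (INF i0. principal {i. le i0 i})"

definition approx_unit :: "('h::chilbert_space \<Rightarrow> 'h) set \<Rightarrow> ('i \<Rightarrow> 'i \<Rightarrow> bool) \<Rightarrow> ('i \<Rightarrow> 'h \<Rightarrow> 'h) \<Rightarrow> bool" where
  "approx_unit A le e \<longleftrightarrow> (\<forall>i. e i \<in> A) \<and>
     (\<forall>a\<in>A. ((\<lambda>i. onorm (\<lambda>x. e i (a x) - a x)) \<longlongrightarrow> 0) (net_filter le) \<and>
            ((\<lambda>i. onorm (\<lambda>x. a (e i x) - a x)) \<longlongrightarrow> 0) (net_filter le))"

definition ultrafilter :: "'i filter \<Rightarrow> bool" where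
  "ultrafilter U \<longleftrightarrow> U \<noteq> bot \<and> (\<forall>P. eventually P U \<or> eventually (\<lambda>x. \<not> P x) U)"

definition cofinal :: "('i \<Rightarrow> 'i \<Rightarrow> bool) \<Rightarrow> 'i filter \<Rightarrow> bool" where
  "cofinal le U \<longleftrightarrow> (\<forall>i0. eventually (\<lambda>i. le i0 i) U)"

definition bfam :: "('h::chilbert_space \<Rightarrow> 'h) set \<Rightarrow> ('i \<Rightarrow> 'h \<Rightarrow> 'h) \<Rightarrow> bool" where
  "bfam A F \<longleftrightarrow> (\<forall>i. F i \<in> A) \<and> (\<exists>C. \<forall>i. onorm (F i) \<le> C)"

definition strict_conv :: "('h::chilbert_space \<Rightarrow> 'h) set \<Rightarrow> 'i filter \<Rightarrow> ('i \<Rightarrow> 'h \<Rightarrow> 'h) \<Rightarrow> ('h \<Rightarrow> 'h) \<Rightarrow> bool" where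
  "strict_conv A U F T \<longleftrightarrow>
     (\<forall>x\<in>A. \<forall>\<epsilon>>0. eventually (\<lambda>i. onorm (\<lambda>h. F i (x h) - T (x h)) < \<epsilon> \<and>
                                    onorm (\<lambda>h. x (F i h) - x (T h)) < \<epsilon>) U)"

text \<open>Representing families of the classes in A^{sU}.\<close>
definition sU_fams :: "('h::chilbert_space \<Rightarrow> 'h) set \<Rightarrow> 'i filter \<Rightarrow> ('i \<Rightarrow> 'h \<Rightarrow> 'h) set" where
  "sU_fams A U = {F. bfam A F \<and> (\<exists>T. bop T \<and> strict_conv A U F T)}"

text \<open>The coset of (the class of) F modulo J, as a set of representing families.
  (Families with U-null difference lie in the same coset since J contains the zero class.)\<close>
definition qclass :: "('h::chilbert_space \<Rightarrow> 'h) set \<Rightarrow> 'i filter \<Rightarrow> ('i \<Rightarrow> 'h \<Rightarrow> 'h) \<Rightarrow> ('i \<Rightarrow> 'h \<Rightarrow> 'h) set" where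
  "qclass A U F = {G \<in> sU_fams A U. strict_conv A U (\<lambda>i h. F i h - G i h) (\<lambda>h. 0)}"

definition Q :: "('h::chilbert_space \<Rightarrow> 'h) set \<Rightarrow> 'i filter \<Rightarrow> ('i \<Rightarrow> 'h \<Rightarrow> 'h) set set" where
  "Q A U = qclass A U ` sU_fams A U"

definition qrep :: "('i \<Rightarrow> 'h \<Rightarrow> 'h) set \<Rightarrow> ('i \<Rightarrow> 'h \<Rightarrow> 'h)" where
  "qrep c = (SOME F. F \<in> c)"

definition qzero :: "('h::chilbert_space \<Rightarrow> 'h) set \<Rightarrow> 'i filter \<Rightarrow> ('i \<Rightarrow> 'h \<Rightarrow> 'h) set" where
  "qzero A U = qclass A U (\<lambda>i h. 0)"

definition qadd where
  "qadd A U c d = qclass A U (\<lambda>i h. qrep c i h + qrep d i h)"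

definition qscale where
  "qscale A U z c = qclass A U (\<lambda>i h. scaleC z (qrep c i h))"

definition qmul where
  "qmul A U c d = qclass A U (\<lambda>i h. qrep c i (qrep d i h))"

definition qstar where
  "qstar A U c = qclass A U (\<lambda>i. adj (qrep c i))"

text \<open>Quotient norm: norm of A^U is the U-limit of the norms; quotient by J takes the infimum over the coset.\<close>
definition qnorm :: "('h::chilbert_space \<Rightarrow> 'h) set \<Rightarrow> 'i filter \<Rightarrow> ('i \<Rightarrow> 'h \<Rightarrow> 'h) set \<Rightarrow> real" where
  "qnorm A U c = Inf ((\<lambda>G. Lim U (\<lambda>i. onorm (G i))) ` c)"

definition qconst :: "('h::chilbert_space \<Rightarrow> 'h) set \<Rightarrow> 'i filter \<Rightarrow> ('h \<Rightarrow> 'h) \<Rightarrow> ('i \<Rightarrow> 'h \<Rightarrow> 'h) set" where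
  "qconst A U a = qclass A U (\<lambda>i. a)"

definition qclosed :: "('h::chilbert_space \<Rightarrow> 'h) set \<Rightarrow> 'i filter \<Rightarrow> ('i \<Rightarrow> 'h \<Rightarrow> 'h) set set \<Rightarrow> bool" where
  "qclosed A U S \<longleftrightarrow> (\<forall>c\<in>Q A U. (\<forall>\<epsilon>>0. \<exists>d\<in>S. qnorm A U (qadd A U c (qscale A U (-1) d)) < \<epsilon>) \<longrightarrow> c \<in> S)"

definition q_ideal :: "('h::chilbert_space \<Rightarrow> 'h) set \<Rightarrow> 'i filter \<Rightarrow> ('i \<Rightarrow> 'h \<Rightarrow> 'h) set set \<Rightarrow> bool" where
  "q_ideal A U S \<longleftrightarrow> S \<subseteq> Q A U \<and> qzero A U \<in> S \<and>
     (\<forall>c\<in>S. \<forall>d\<in>S. qadd A U c d \<in> S) \<and> (\<forall>z. \<forall>c\<in>S. qscale A U z c \<in> S) \<and>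
     (\<forall>c\<in>Q A U. \<forall>d\<in>S. qmul A U c d \<in> S \<and> qmul A U d c \<in> S) \<and> qclosed A U S"

definition q_essential_ideal :: "('h::chilbert_space \<Rightarrow> 'h) set \<Rightarrow> 'i filter \<Rightarrow> ('i \<Rightarrow> 'h \<Rightarrow> 'h) set set \<Rightarrow> bool" where
  "q_essential_ideal A U S \<longleftrightarrow> q_ideal A U S \<and>
     (\<forall>S'. q_ideal A U S' \<and> S' \<noteq> {qzero A U} \<longrightarrow> S \<inter> S' \<noteq> {qzero A U})"

definition qhom :: "('h::chilbert_space \<Rightarrow> 'h) set \<Rightarrow> 'i filter \<Rightarrow> ('b::cstar_algebra \<Rightarrow> ('i \<Rightarrow> 'h \<Rightarrow> 'h) set) \<Rightarrow> bool" where
  "qhom A U \<phi> \<longleftrightarrow> (\<forall>b. \<phi> b \<in> Q A U) \<and>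
     (\<forall>x y. \<phi> (x + y) = qadd A U (\<phi> x) (\<phi> y) \<and> \<phi> (x * y) = qmul A U (\<phi> x) (\<phi> y)) \<and>
     (\<forall>z x. \<phi> (scaleC z x) = qscale A U z (\<phi> x)) \<and>
     (\<forall>x. \<phi> (cstar x) = qstar A U (\<phi> x))"

text \<open>B contains A as an ideal: an injective *-homomorphism of A into B whose image is a two-sided ideal.\<close>
definition ideal_embedding :: "('h::chilbert_space \<Rightarrow> 'h) set \<Rightarrow> (('h \<Rightarrow> 'h) \<Rightarrow> 'b::cstar_algebra) \<Rightarrow> bool" where
  "ideal_embedding A \<iota> \<longleftrightarrow> inj_on \<iota> A \<and>
     (\<forall>a\<in>A. \<forall>b\<in>A. \<iota> (\<lambda>x. a x + b x) = \<iota> a + \<iota> b \<and> \<iota> (a \<circ> b) = \<iota> a * \<iota> b) \<and>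
     (\<forall>z. \<forall>a\<in>A. \<iota> (\<lambda>x. scaleC z (a x)) = scaleC z (\<iota> a)) \<and>
     (\<forall>a\<in>A. \<iota> (adj a) = cstar (\<iota> a)) \<and>
     (\<forall>y. \<forall>a\<in>A. y * \<iota> a \<in> \<iota> ` A \<and> \<iota> a * y \<in> \<iota> ` A)"

end

theory Submission
  imports Defs
begin

text \<open>
  A family \<open>(F\<^sub>i)\<close> in \<open>A\<^sup>s\<^sup>U\<close> is determined modulo \<open>J\<close> by its strict limit \<open>T\<close>, an operator with
  \<open>T A \<union> A T \<subseteq> A\<close>; so \<open>A\<^sup>s\<^sup>U/J\<close> is the algebra of such strict limits, with \<open>A\<close> sitting inside as the
  constant families. Since \<open>A\<close> acts non-degenerately, an operator vanishing on \<open>A H\<close> is zero, which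
  makes \<open>A\<close> an essential ideal. Given \<open>A\<close> as an ideal of \<open>B\<close>, left multiplication by \<open>b\<close> is a
  bounded map on \<open>A\<close> (uniform boundedness, using that \<open>A\<close> is complete and \<open>x (b a) = (x b) a\<close>), so
  the bounded net \<open>b e\<^sub>i\<close> converges strongly, and in fact strictly, to an operator \<open>T\<^sub>b\<close> with
  \<open>T\<^sub>b a = b a\<close>; \<open>b \<mapsto> T\<^sub>b\<close> is the required \<open>*\<close>-homomorphism, and any other one must satisfy the
  same equations \<open>\<phi>(b) a = \<phi>(b a) = b a\<close>, hence agree with it by non-degeneracy.
\<close>

section \<open>Complex inner product spaces\<close>

lemma scaleC_zero_left [simp]: "scaleC 0 (x::'a::complex_vector) = 0"
proof -
  have "scaleC 0 x = scaleC 0 x + scaleC 0 x" by (metis add_0 scaleC_add_left)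
  then show ?thesis by simp
qed

lemma scaleC_zero_right [simp]: "scaleC a (0::'a::complex_vector) = 0"
proof -
  have "scaleC a (0::'a) = scaleC a 0 + scaleC a 0" by (metis add_0 scaleC_add_right)
  then show ?thesis by simp
qed

lemma scaleC_minus_right: "scaleC a (- x::'a::complex_vector) = - scaleC a x"
proof -
  have "scaleC a (-x) + scaleC a x = 0" by (simp flip: scaleC_add_right)
  then show ?thesis by (simp only: eq_neg_iff_add_eq_0)
qed

lemma scaleC_diff_right: "scaleC a (x - y::'a::complex_vector) = scaleC a x - scaleC a y"
  by (simp only: diff_conv_add_uminus scaleC_add_right scaleC_minus_right)

lemma scaleC_minus_left: "scaleC (- a) (x::'a::complex_vector) = - scaleC a x"
proof -
  have "scaleC (-a) x + scaleC a x = 0" by (simp flip: scaleC_add_left)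
  then show ?thesis by (simp only: eq_neg_iff_add_eq_0)
qed

lemma scaleC_minus_one [simp]: "scaleC (- 1) (x::'a::complex_vector) = - x"
  by (simp add: scaleC_minus_left scaleC_one)

lemma cinner_zero_left [simp]: "cinner 0 (y::'a::complex_inner) = 0"
proof -
  have "cinner (0::'a) y = cinner 0 y + cinner 0 y" by (metis add_0 cinner_add_left)
  then show ?thesis by simp
qed

lemma cinner_add_right: "cinner (x::'a::complex_inner) (y + z) = cinner x y + cinner x z"
  by (simp only: cinner_commute[of x] cinner_add_left complex_cnj_add)

lemma cinner_scaleC_right: "cinner (x::'a::complex_inner) (scaleC c y) = c * cinner x y"
  by (simp only: cinner_commute[of x] cinner_scaleC_left complex_cnj_cnj complex_cnj_mult)

lemma cinner_minus_left: "cinner (- x::'a::complex_inner) y = - cinner x y"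
proof -
  have "cinner (- x) y + cinner x y = 0" by (simp flip: cinner_add_left)
  then show ?thesis by (simp only: eq_neg_iff_add_eq_0)
qed

lemma cinner_diff_left: "cinner (x - y::'a::complex_inner) z = cinner x z - cinner y z"
  by (simp only: cinner_add_left cinner_minus_left diff_conv_add_uminus)

lemma cinner_minus_right: "cinner (x::'a::complex_inner) (- y) = - cinner x y"
  by (simp only: cinner_commute[of x] cinner_minus_left complex_cnj_minus)

lemma cinner_diff_right: "cinner (x::'a::complex_inner) (y - z) = cinner x y - cinner x z"
  by (simp only: cinner_add_right cinner_minus_right diff_conv_add_uminus)

lemma cinner_right_ext: "(\<And>y. cinner y (a::'a::complex_inner) = cinner y b) \<Longrightarrow> a = b"
proof -
  assume h: "\<And>y. cinner y a = cinner y b"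
  have "cinner (a - b) (a - b) = 0" by (simp only: cinner_diff_right h) simp
  then show ?thesis by (simp add: cinner_norm)
qed

lemma norm_diff_scaleC_square:
  fixes w m :: "'a::complex_inner"
  assumes "m \<noteq> 0"
  defines "t \<equiv> cinner m w / complex_of_real ((norm m)\<^sup>2)"
  shows "(norm (w - scaleC t m))\<^sup>2 = (norm w)\<^sup>2 - (cmod (cinner m w))\<^sup>2 / (norm m)\<^sup>2"
proof -
  define \<alpha> where "\<alpha> = cinner m w"
  define N where "N = (norm m)\<^sup>2"
  have N: "N > 0" using assms by (simp add: N_def)
  have wm: "cinner w m = cnj \<alpha>" by (simp add: \<alpha>_def cinner_commute[of w m])
  have "complex_of_real ((norm (w - scaleC t m))\<^sup>2) = cinner (w - scaleC t m) (w - scaleC t m)"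
    by (simp add: cinner_norm)
  also have "\<dots> = cinner w w - t * cinner w m - cnj t * cinner m w + cnj t * t * cinner m m"
    by (simp add: cinner_diff_left cinner_diff_right cinner_scaleC_left cinner_scaleC_right algebra_simps)
  also have "\<dots> = of_real ((norm w)\<^sup>2) - t * cnj \<alpha> - cnj t * \<alpha> + cnj t * t * of_real N"
    by (simp add: wm \<alpha>_def N_def cinner_norm)
  also have "\<dots> = of_real ((norm w)\<^sup>2) - \<alpha> * cnj \<alpha> / of_real N"
    using N by (simp add: t_def \<alpha>_def[symmetric] N_def[symmetric] field_simps)
  also have "\<alpha> * cnj \<alpha> = of_real ((cmod \<alpha>)\<^sup>2)"
    by (rule complex_norm_square[symmetric])
  finally show ?thesis unfolding \<alpha>_def N_def by (metis of_real_diff of_real_divide of_real_eq_iff)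
qed

lemma cinner_Cauchy_Schwarz: "cmod (cinner (x::'a::complex_inner) y) \<le> norm x * norm y"
proof (cases "x = 0")
  case False
  from norm_diff_scaleC_square[OF False, of y]
  have "0 \<le> (norm y)\<^sup>2 - (cmod (cinner x y))\<^sup>2 / (norm x)\<^sup>2" by (metis zero_le_power2)
  then have "(cmod (cinner x y))\<^sup>2 \<le> (norm x * norm y)\<^sup>2"
    using False by (simp add: field_simps power_mult_distrib)
  then show ?thesis by (rule power2_le_imp_le) simp
qed simp

lemma norm_add_square: "(norm (x + y::'a::complex_inner))\<^sup>2 = (norm x)\<^sup>2 + (norm y)\<^sup>2 + 2 * Re (cinner x y)"
proof -
  have "complex_of_real ((norm (x+y))\<^sup>2) = cinner (x+y) (x+y)"
    by (simp only: cinner_norm)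
  also have "\<dots> = cinner x x + cinner y y + (cinner x y + cinner y x)"
    by (simp add: cinner_add_left cinner_add_right)
  also have "cinner x y + cinner y x = of_real (2 * Re (cinner x y))"
    by (metis cinner_commute complex_add_cnj)
  finally have "complex_of_real ((norm (x+y))\<^sup>2) = of_real ((norm x)\<^sup>2 + (norm y)\<^sup>2 + 2 * Re (cinner x y))"
    by (simp add: cinner_norm)
  then show ?thesis by (metis of_real_eq_iff)
qed

lemma parallelogram_law:
  "(norm (x + y::'a::complex_inner))\<^sup>2 + (norm (x - y))\<^sup>2 = 2 * (norm x)\<^sup>2 + 2 * (norm y)\<^sup>2"
  using norm_add_square[of x "-y"] by (simp add: norm_add_square cinner_minus_right)

lemma apollonius_identity:
  fixes u x y :: "'a::complex_inner"
  shows "(norm (x - y))\<^sup>2 = 2 * (norm (u - x))\<^sup>2 + 2 * (norm (u - y))\<^sup>2 - 4 * (norm (u - (1/2) *\<^sub>R (x + y)))\<^sup>2"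
proof -
  have "(u - x) + (u - y) = 2 *\<^sub>R (u - (1/2) *\<^sub>R (x + y))"
    by (simp add: algebra_simps scaleR_2)
  then have "(norm ((u - x) + (u - y)))\<^sup>2 = 4 * (norm (u - (1/2) *\<^sub>R (x + y)))\<^sup>2"
    by (simp add: power_mult_distrib)
  moreover have "(u - x) - (u - y) = y - x" by simp
  ultimately show ?thesis
    using parallelogram_law[of "u - x" "u - y"] by (simp add: norm_minus_commute)
qed

section \<open>Bounded complex-linear operators\<close>

lemma scaleC_bounded_linear: "bounded_linear (\<lambda>x::'a::complex_normed_vector. scaleC c x)"
proof (rule bounded_linear_intro[where K="cmod c"])
  show "scaleC c (x + y) = scaleC c x + scaleC c y" for x y :: 'a by (rule scaleC_add_right)
  show "scaleC c (r *\<^sub>R x) = r *\<^sub>R scaleC c x" for r and x :: 'a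
    by (simp add: scaleR_scaleC scaleC_scaleC mult.commute)
  show "norm (scaleC c x) \<le> norm x * cmod c" for x :: 'a
    by (simp add: norm_scaleC mult.commute)
qed

lemma bopD: assumes "bop T" shows "bounded_linear T" "T (scaleC c x) = scaleC c (T x)"
  using assms by (auto simp: bop_def)

lemma bop_add_apply: "bop T \<Longrightarrow> T (x + y) = T x + T y"
  by (simp add: bop_def linear_add bounded_linear.linear)

lemma bop_diff_apply: "bop T \<Longrightarrow> T (x - y) = T x - T y"
  by (simp add: bop_def linear_diff bounded_linear.linear)

lemma bop_zero_apply: "bop T \<Longrightarrow> T 0 = 0"
  by (simp add: bop_def linear_0 bounded_linear.linear)

lemma bop_scaleR_apply: "bop T \<Longrightarrow> T (r *\<^sub>R x) = r *\<^sub>R T x"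
  by (simp add: bop_def linear_scale bounded_linear.linear)

lemma bop_norm: "bop T \<Longrightarrow> norm (T x) \<le> onorm T * norm x"
  by (simp add: bop_def onorm)

lemma bop_onorm_nonneg: "bop T \<Longrightarrow> 0 \<le> onorm T"
  by (simp add: bop_def onorm_pos_le)

lemma bop_comp: "bop S \<Longrightarrow> bop T \<Longrightarrow> bop (\<lambda>x. S (T x))"
  unfolding bop_def using bounded_linear_compose[of S T] by (simp add: comp_def)

lemma bop_add: "bop S \<Longrightarrow> bop T \<Longrightarrow> bop (\<lambda>x. S x + T x)"
  by (simp add: bop_def bounded_linear_add scaleC_add_right)

lemma bop_diff: "bop S \<Longrightarrow> bop T \<Longrightarrow> bop (\<lambda>x. S x - T x)"
  by (simp add: bop_def bounded_linear_sub scaleC_diff_right)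

lemma bop_zero: "bop (\<lambda>x. 0)"
  by (simp add: bop_def bounded_linear_zero)

lemma bop_scaleC: "bop T \<Longrightarrow> bop (\<lambda>x. scaleC c (T x))"
  unfolding bop_def
  using bounded_linear_compose[OF scaleC_bounded_linear[of c], of T]
  by (auto simp: comp_def scaleC_scaleC mult.commute)

lemma bop_comp_diff_right: "bop S \<Longrightarrow> bop T \<Longrightarrow> bop x \<Longrightarrow> bop (\<lambda>h. S (x h) - T (x h))"
  by (rule bop_diff[OF bop_comp[of S x] bop_comp[of T x]])

lemma bop_comp_diff_left: "bop S \<Longrightarrow> bop T \<Longrightarrow> bop x \<Longrightarrow> bop (\<lambda>h. x (S h) - x (T h))"
  by (rule bop_diff[OF bop_comp[of x S] bop_comp[of x T]])

lemma onorm_scaleC_le: assumes "bop T" shows "onorm (\<lambda>x. scaleC c (T x)) \<le> cmod c * onorm T"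
proof (rule onorm_bound)
  show "0 \<le> cmod c * onorm T" using bop_onorm_nonneg[OF assms] by simp
  show "norm (scaleC c (T x)) \<le> cmod c * onorm T * norm x" for x
    using mult_left_mono[OF bop_norm[OF assms, of x], of "cmod c"] by (simp add: norm_scaleC mult.assoc)
qed

lemma onorm_comp_le: "bop S \<Longrightarrow> bop T \<Longrightarrow> onorm (\<lambda>x. S (T x)) \<le> onorm S * onorm T"
  using onorm_compose[of S T] by (simp add: bop_def comp_def)

lemma onorm_add_le: "bop S \<Longrightarrow> bop T \<Longrightarrow> onorm (\<lambda>x. S x + T x) \<le> onorm S + onorm T"
  by (simp add: bop_def onorm_triangle)

lemma onorm_diff_commute: "onorm (\<lambda>x. S x - T x) = onorm (\<lambda>x. T x - S x)"
  using onorm_neg[of "\<lambda>x. S x - T x"] by simp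

lemma onorm_diff_triangle: "bop R \<Longrightarrow> bop S \<Longrightarrow> bop T \<Longrightarrow>
   onorm (\<lambda>x. R x - T x) \<le> onorm (\<lambda>x. R x - S x) + onorm (\<lambda>x. S x - T x)"
  using onorm_add_le[OF bop_diff[of R S] bop_diff[of S T]] by simp

lemma onorm_diff_le: "bop S \<Longrightarrow> bop T \<Longrightarrow> onorm (\<lambda>x. S x - T x) \<le> onorm S + onorm T"
  using onorm_diff_triangle[of S "\<lambda>x. 0" T] by (simp add: bop_zero onorm_neg)

lemma onorm_comp_diff_le_right:
  assumes F: "bop F" and G: "bop G" and T: "bop T" and S: "bop S" and "onorm F \<le> C"
  shows "onorm (\<lambda>h. F (G h) - T (S h)) \<le> C * onorm (\<lambda>h. G h - S h) + onorm (\<lambda>h. F (S h) - T (S h))"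
proof -
  have "(\<lambda>h. F (G h) - T (S h)) = (\<lambda>h. F (G h - S h) + (F (S h) - T (S h)))"
    by (simp add: bop_diff_apply[OF F])
  then have "onorm (\<lambda>h. F (G h) - T (S h)) \<le> onorm (\<lambda>h. F (G h - S h)) + onorm (\<lambda>h. F (S h) - T (S h))"
    using onorm_add_le[OF bop_comp[OF F bop_diff[OF G S]] bop_diff[OF bop_comp[OF F S] bop_comp[OF T S]]]
    by simp
  moreover have "onorm (\<lambda>h. F (G h - S h)) \<le> C * onorm (\<lambda>h. G h - S h)"
    using onorm_comp_le[OF F bop_diff[OF G S]] mult_right_mono[OF \<open>onorm F \<le> C\<close> bop_onorm_nonneg[OF bop_diff[OF G S]]]
    by simp
  ultimately show ?thesis by linarith
qed

lemma onorm_comp_diff_le_left: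
  assumes F: "bop F" and G: "bop G" and T: "bop T" and S: "bop S" and "onorm G \<le> C"
  shows "onorm (\<lambda>h. F (G h) - T (S h)) \<le> onorm (\<lambda>h. F h - T h) * C + onorm (\<lambda>h. T (G h) - T (S h))"
proof -
  have "onorm (\<lambda>h. F (G h) - T (S h)) \<le> onorm (\<lambda>h. F (G h) - T (G h)) + onorm (\<lambda>h. T (G h) - T (S h))"
    using onorm_diff_triangle[OF bop_comp[OF F G] bop_comp[OF T G] bop_comp[OF T S]] .
  moreover have "onorm (\<lambda>h. F (G h) - T (G h)) \<le> onorm (\<lambda>h. F h - T h) * C"
    using onorm_comp_le[OF bop_diff[OF F T] G] mult_left_mono[OF \<open>onorm G \<le> C\<close> bop_onorm_nonneg[OF bop_diff[OF F T]]]
    by simp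
  ultimately show ?thesis by linarith
qed

lemma onorm_eq_zero_iff: "bop T \<Longrightarrow> onorm T = 0 \<longleftrightarrow> T = (\<lambda>x. 0)"
  by (simp add: bop_def onorm_eq_0 fun_eq_iff)

section \<open>Riesz representation and adjoints\<close>

lemma minimising_sequence_Cauchy:
  fixes q :: "nat \<Rightarrow> 'a::complex_inner"
  assumes mid: "\<And>m n. d \<le> (norm (u - (1/2) *\<^sub>R (q m + q n)))\<^sup>2"
    and q: "\<And>n. (norm (u - q n))\<^sup>2 < d + 1 / Suc n"
  shows "Cauchy q"
proof (rule metric_CauchyI)
  have close: "(norm (q m - q n))\<^sup>2 < 2 / Suc m + 2 / Suc n" for m n
    using apollonius_identity[of "q m" "q n" u] mid[of m n] q[of m] q[of n] by linarith
  fix \<epsilon> :: real assume "\<epsilon> > 0"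
  obtain N :: nat where "4 / \<epsilon>\<^sup>2 < N" using reals_Archimedean2 by blast
  then have "4 / \<epsilon>\<^sup>2 < Suc N" by simp
  then have "4 / Suc N < \<epsilon>\<^sup>2"
    using \<open>\<epsilon> > 0\<close> by (simp add: divide_less_eq mult.commute)
  have "dist (q m) (q n) < \<epsilon>" if "m \<ge> N" "n \<ge> N" for m n
  proof -
    have "2 / Suc m \<le> 2 / Suc N" "2 / Suc n \<le> 2 / Suc N" using that by (auto simp: frac_le)
    then have "(norm (q m - q n))\<^sup>2 < \<epsilon>\<^sup>2" using close[of m n] \<open>4 / Suc N < \<epsilon>\<^sup>2\<close> by simp
    then show ?thesis using \<open>\<epsilon> > 0\<close> by (simp add: dist_norm power_less_imp_less_base)
  qed
  then show "\<exists>M. \<forall>m\<ge>M. \<forall>n\<ge>M. dist (q m) (q n) < \<epsilon>" by blast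
qed

lemma nearest_point_exists:
  fixes u :: "'a::chilbert_space"
  assumes "closed M" "M \<noteq> {}"
    and midpoint: "\<And>a b. a \<in> M \<Longrightarrow> b \<in> M \<Longrightarrow> (1/2) *\<^sub>R (a + b) \<in> M"
  shows "\<exists>p\<in>M. \<forall>m\<in>M. norm (u - p) \<le> norm (u - m)"
proof -
  define d where "d = Inf {(norm (u - m))\<^sup>2 |m. m \<in> M}"
  have d_le: "d \<le> (norm (u - m))\<^sup>2" if "m \<in> M" for m
    unfolding d_def by (rule cInf_lower) (use that in \<open>auto intro!: bdd_belowI[of _ 0]\<close>)
  have "\<exists>m\<in>M. (norm (u - m))\<^sup>2 < d + 1 / Suc n" for n
    using cInf_lessD[of "{(norm (u - m))\<^sup>2 |m. m \<in> M}" "d + 1 / Suc n"] \<open>M \<noteq> {}\<close>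
    by (auto simp: d_def)
  then obtain q where q: "\<And>n. q n \<in> M" "\<And>n. (norm (u - q n))\<^sup>2 < d + 1 / Suc n"
    by metis
  have "Cauchy q"
    by (rule minimising_sequence_Cauchy[OF d_le[OF midpoint[OF q(1) q(1)]] q(2)])
  then obtain p where p: "q \<longlonglongrightarrow> p" using Cauchy_convergent_iff convergent_def by blast
  have "p \<in> M" using closed_sequentially[OF \<open>closed M\<close> _ p] q(1) by blast
  moreover have "(norm (u - p))\<^sup>2 \<le> d"
  proof (rule LIMSEQ_le)
    show "(\<lambda>n. (norm (u - q n))\<^sup>2) \<longlonglongrightarrow> (norm (u - p))\<^sup>2" by (intro tendsto_intros p)
    show "(\<lambda>n. d + 1 / Suc n) \<longlonglongrightarrow> d"
      using tendsto_add[OF tendsto_const LIMSEQ_Suc[OF lim_const_over_n[of 1]], of d] by simp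
  qed (use q(2) in \<open>auto intro: less_imp_le\<close>)
  ultimately show ?thesis
  proof (intro bexI ballI)
    fix m assume "m \<in> M"
    with \<open>(norm (u - p))\<^sup>2 \<le> d\<close> have "(norm (u - p))\<^sup>2 \<le> (norm (u - m))\<^sup>2"
      using d_le order_trans by blast
    then show "norm (u - p) \<le> norm (u - m)" by (rule power2_le_imp_le) simp
  qed
qed

lemma nearest_point_orthogonal:
  fixes u :: "'a::complex_inner"
  assumes lin: "\<And>c m. m \<in> M \<Longrightarrow> p + scaleC c m \<in> M"
    and nearest: "\<forall>m\<in>M. norm (u - p) \<le> norm (u - m)" and "m \<in> M"
  shows "cinner m (u - p) = 0"
proof (cases "m = 0")
  case False
  define t where "t = cinner m (u - p) / complex_of_real ((norm m)\<^sup>2)"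
  have "norm (u - p) \<le> norm (u - (p + scaleC t m))" using nearest lin[OF \<open>m \<in> M\<close>] by blast
  then have "(norm (u - p))\<^sup>2 \<le> (norm ((u - p) - scaleC t m))\<^sup>2"
    by (simp add: diff_diff_eq power_mono)
  also have "\<dots> = (norm (u - p))\<^sup>2 - (cmod (cinner m (u - p)))\<^sup>2 / (norm m)\<^sup>2"
    unfolding t_def by (rule norm_diff_scaleC_square[OF False])
  finally show ?thesis using False by (simp add: divide_le_0_iff)
qed simp

lemma riesz_representation:
  fixes f :: "'a::chilbert_space \<Rightarrow> complex"
  assumes add: "\<And>x y. f (x + y) = f x + f y"
    and sc: "\<And>c x. f (scaleC c x) = c * f x"
    and bd: "\<And>x. cmod (f x) \<le> K * norm x"
  shows "\<exists>z. \<forall>x. f x = cinner z x"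
proof (cases "\<forall>x. f x = 0")
  case False
  then obtain u0 where "f u0 \<noteq> 0" by blast
  define u where "u = scaleC (1 / f u0) u0"
  have fu: "f u = 1" using \<open>f u0 \<noteq> 0\<close> by (simp add: u_def sc)
  have scR: "f (r *\<^sub>R x) = complex_of_real r * f x" for r x
    by (simp add: scaleR_scaleC sc)
  have diff: "f (x - y) = f x - f y" for x y
    using add[of x "-y"] sc[of "-1" y] by simp
  define M where "M = {x. f x = 0}"
  have "bounded_linear f"
    by (rule bounded_linear_intro[where K=K]) (use add scR bd in \<open>auto simp: mult.commute scaleR_conv_of_real\<close>)
  then have "closed M"
    unfolding M_def by (intro closed_Collect_eq) (auto intro: linear_continuous_on)
  moreover have "0 \<in> M" using diff[of 0 0] by (simp add: M_def)
  ultimately obtain p where p: "p \<in> M" "\<forall>m\<in>M. norm (u - p) \<le> norm (u - m)"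
    using nearest_point_exists[of M u] by (auto simp: M_def scR add)
  define w where "w = u - p"
  have fw: "f w = 1" using p(1) fu by (simp add: w_def diff M_def)
  have orth: "cinner m w = 0" if "m \<in> M" for m
    unfolding w_def by (rule nearest_point_orthogonal[OF _ p(2) that]) (use p(1) in \<open>simp add: M_def add sc\<close>)
  \<comment> \<open>Every \<open>x\<close> splits as \<open>f x \<cdot> w\<close> plus an element of the kernel, which is orthogonal to \<open>w\<close>.\<close>
  have key: "cinner w x = f x * complex_of_real ((norm w)\<^sup>2)" for x
  proof -
    have "cinner (x - scaleC (f x) w) w = 0" by (rule orth) (simp add: M_def diff sc fw)
    then have "cinner w (x - scaleC (f x) w) = 0" by (metis cinner_commute complex_cnj_zero)
    then show ?thesis by (simp add: cinner_diff_right cinner_scaleC_right cinner_norm)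
  qed
  have "w \<noteq> 0" using fw diff[of 0 0] by auto
  then show ?thesis
    by (intro exI[of _ "scaleC (complex_of_real (1 / (norm w)\<^sup>2)) w"])
       (simp add: cinner_scaleC_left key)
qed (auto intro: exI[of _ 0])
lemma adj_exists:
  fixes T :: "'h::chilbert_space \<Rightarrow> 'h"
  assumes "bop T"
  shows "\<exists>S. \<forall>x y. cinner (T x) y = cinner x (S y)"
proof -
  have "\<forall>y. \<exists>z. \<forall>x. cinner y (T x) = cinner z x"
  proof
    fix y
    show "\<exists>z. \<forall>x. cinner y (T x) = cinner z x"
    proof (rule riesz_representation[where K="norm y * onorm T"])
      show "cinner y (T (x1 + x2)) = cinner y (T x1) + cinner y (T x2)" for x1 x2
        using assms by (simp add: bop_add_apply cinner_add_right)
      show "cinner y (T (scaleC c x)) = c * cinner y (T x)" for c x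
        using assms by (simp add: bopD cinner_scaleC_right)
      show "cmod (cinner y (T x)) \<le> norm y * onorm T * norm x" for x
      proof -
        have "cmod (cinner y (T x)) \<le> norm y * norm (T x)" by (rule cinner_Cauchy_Schwarz)
        also have "\<dots> \<le> norm y * (onorm T * norm x)"
          by (rule mult_left_mono[OF bop_norm[OF assms]]) simp
        finally show ?thesis by (simp add: mult.assoc)
      qed
    qed
  qed
  then have "\<exists>S. \<forall>y. \<forall>x. cinner y (T x) = cinner (S y) x" by (rule choice)
  then obtain S where S: "\<And>y x. cinner y (T x) = cinner (S y) x" by blast
  show ?thesis
  proof (intro exI allI)
    fix x y
    have "cinner (T x) y = cnj (cinner y (T x))" by (rule cinner_commute)
    also have "\<dots> = cnj (cinner (S y) x)" by (simp only: S)
    also have "\<dots> = cinner x (S y)" by (simp only: cinner_commute[of x "S y"] complex_cnj_cnj)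
    finally show "cinner (T x) y = cinner x (S y)" .
  qed
qed

lemma cinner_adj_right:
  assumes "bop T"
  shows "cinner (T x) y = cinner x (adj T y)"
proof -
  have "\<exists>!S. \<forall>x y. cinner (T x) y = cinner x (S y)"
  proof (rule ex_ex1I)
    show "\<exists>S. \<forall>x y. cinner (T x) y = cinner x (S y)" by (rule adj_exists[OF assms])
  next
    fix S S' assume h: "\<forall>x y. cinner (T x) y = cinner x (S y)" "\<forall>x y. cinner (T x) y = cinner x (S' y)"
    show "S = S'"
    proof
      fix y show "S y = S' y" by (rule cinner_right_ext) (simp only: h[rule_format, symmetric])
    qed
  qed
  then have "\<forall>x y. cinner (T x) y = cinner x (adj T y)"
    unfolding adj_def by (rule theI')
  then show ?thesis by blast
qed

lemma adj_eqI:
  assumes "bop T" "\<And>x y. cinner (T x) y = cinner x (S y)"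
  shows "adj T = S"
proof (rule ext, rule cinner_right_ext)
  fix y x
  show "cinner x (adj T y) = cinner x (S y)" by (simp only: cinner_adj_right[OF assms(1), symmetric] assms(2))
qed

lemma cinner_adj_left:
  assumes "bop T"
  shows "cinner (adj T y) x = cinner y (T x)"
proof -
  have "cinner (adj T y) x = cnj (cinner x (adj T y))" by (rule cinner_commute)
  also have "\<dots> = cnj (cinner (T x) y)" by (simp only: cinner_adj_right[OF assms])
  also have "\<dots> = cinner y (T x)" by (simp only: cinner_commute[of y "T x"] complex_cnj_cnj)
  finally show ?thesis .
qed

lemma adj_bop_bound:
  assumes T: "bop T"
  shows "bop (adj T)" "onorm (adj T) \<le> onorm T"
proof -
  have addA: "adj T (y + z) = adj T y + adj T z" for y z
    by (rule cinner_right_ext) (simp only: cinner_adj_right[OF T, symmetric] cinner_add_right)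
  have scA: "adj T (scaleC c y) = scaleC c (adj T y)" for c y
    by (rule cinner_right_ext) (simp only: cinner_adj_right[OF T, symmetric] cinner_scaleC_right)
  have nb: "norm (adj T y) \<le> onorm T * norm y" for y
  proof (cases "adj T y = 0")
    case True then show ?thesis by (simp add: bop_onorm_nonneg[OF T])
  next
    case False
    have "complex_of_real ((norm (adj T y))\<^sup>2) = cinner (adj T y) (adj T y)" by (simp only: cinner_norm)
    also have "\<dots> = cinner (T (adj T y)) y" by (simp only: cinner_adj_right[OF T])
    finally have e: "complex_of_real ((norm (adj T y))\<^sup>2) = cinner (T (adj T y)) y" .
    have "(norm (adj T y))\<^sup>2 = cmod (complex_of_real ((norm (adj T y))\<^sup>2))" by (simp add: norm_power)
    also have "\<dots> = cmod (cinner (T (adj T y)) y)" by (simp only: e)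
    also have "\<dots> \<le> norm (T (adj T y)) * norm y" by (rule cinner_Cauchy_Schwarz)
    also have "\<dots> \<le> onorm T * norm (adj T y) * norm y"
      by (intro mult_right_mono bop_norm[OF T]) simp
    finally have "norm (adj T y) * norm (adj T y) \<le> (onorm T * norm y) * norm (adj T y)"
      by (simp add: power2_eq_square algebra_simps)
    then show ?thesis using False by simp
  qed
  show bA: "bop (adj T)"
    unfolding bop_def
  proof (intro conjI allI bounded_linear_intro[where K="onorm T"])
    show "adj T (x + y) = adj T x + adj T y" for x y by (rule addA)
    show "adj T (r *\<^sub>R x) = r *\<^sub>R adj T x" for r x by (simp only: scaleR_scaleC scA)
    show "norm (adj T x) \<le> norm x * onorm T" for x using nb[of x] by (simp add: mult.commute)
    show "adj T (scaleC c x) = scaleC c (adj T x)" for c x by (rule scA)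
  qed
  show "onorm (adj T) \<le> onorm T"
    by (rule onorm_bound[OF bop_onorm_nonneg[OF T] nb])
qed

lemma adj_bop: "bop T \<Longrightarrow> bop (adj T)"
  by (rule adj_bop_bound(1))

lemma adj_adj: assumes "bop T" shows "adj (adj T) = T"
  by (rule adj_eqI[OF adj_bop[OF assms]]) (simp only: cinner_adj_left[OF assms])

lemma onorm_adj: assumes "bop T" shows "onorm (adj T) = onorm T"
proof (rule order_antisym)
  show "onorm (adj T) \<le> onorm T" by (rule adj_bop_bound(2)[OF assms])
  have "onorm (adj (adj T)) \<le> onorm (adj T)" by (rule adj_bop_bound(2)[OF adj_bop[OF assms]])
  then show "onorm T \<le> onorm (adj T)" by (simp only: adj_adj[OF assms])
qed

lemma adj_comp: assumes "bop S" "bop T" shows "adj (\<lambda>x. S (T x)) = (\<lambda>x. adj T (adj S x))"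
  by (rule adj_eqI[OF bop_comp[OF assms]]) (simp only: cinner_adj_right[OF assms(1)] cinner_adj_right[OF assms(2)])

lemma adj_diff: assumes "bop S" "bop T" shows "adj (\<lambda>x. S x - T x) = (\<lambda>x. adj S x - adj T x)"
  by (rule adj_eqI[OF bop_diff[OF assms]])
     (simp only: cinner_adj_right[OF assms(1)] cinner_adj_right[OF assms(2)] cinner_diff_left cinner_diff_right)

section \<open>Nets of operators\<close>

lemma ultrafilter_bounded_tendsto:
  fixes f :: "'i \<Rightarrow> real"
  assumes "ultrafilter U" and bd: "\<And>i. \<bar>f i\<bar> \<le> B"
  shows "\<exists>l. (f \<longlongrightarrow> l) U"
proof -
  have "U \<noteq> bot" and ult: "\<And>P. eventually P U \<or> eventually (\<lambda>x. \<not> P x) U"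
    using assms(1) by (simp_all add: ultrafilter_def)
  \<comment> \<open>The limit is the supremum of the values that \<open>f\<close> eventually exceeds.\<close>
  define Y where "Y = {y. eventually (\<lambda>i. y \<le> f i) U}"
  have "-B \<le> f i" for i using abs_le_D2[OF bd[of i]] by linarith
  then have "-B \<in> Y" unfolding Y_def by (intro CollectI always_eventually allI)
  have Ybd: "y \<le> B" if "y \<in> Y" for y
  proof -
    from that have "eventually (\<lambda>i. y \<le> f i) U" by (simp add: Y_def)
    then have "eventually (\<lambda>i. y \<le> B) U"
      by (rule eventually_mono) (erule order_trans[OF _ abs_le_D1[OF bd]])
    then show ?thesis using \<open>U \<noteq> bot\<close> by (simp add: eventually_const_iff)
  qed
  then have bddY: "bdd_above Y" by (auto simp: bdd_above_def)
  show ?thesis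
  proof (intro exI tendstoI)
    fix \<epsilon> :: real assume "\<epsilon> > 0"
    obtain y where "y \<in> Y" "Sup Y - \<epsilon> < y"
      using less_cSupD[of Y "Sup Y - \<epsilon>"] \<open>-B \<in> Y\<close> \<open>\<epsilon> > 0\<close> by auto
    then have lo: "eventually (\<lambda>i. Sup Y - \<epsilon> < f i) U"
      unfolding Y_def by (auto elim!: eventually_mono)
    have "Sup Y + \<epsilon> \<notin> Y" using cSup_upper[OF _ bddY] \<open>\<epsilon> > 0\<close> by fastforce
    then have hi: "eventually (\<lambda>i. f i < Sup Y + \<epsilon>) U"
      using ult[of "\<lambda>i. Sup Y + \<epsilon> \<le> f i"] by (auto simp: Y_def not_le)
    show "eventually (\<lambda>i. dist (f i) (Sup Y) < \<epsilon>) U"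
      using eventually_conj[OF lo hi] by (rule eventually_mono) (auto simp: dist_real_def abs_less_iff)
  qed
qed

lemma tendsto_0_le:
  fixes f g :: "'i \<Rightarrow> real"
  assumes "\<And>i. f i \<le> g i" "\<And>i. 0 \<le> f i" "(g \<longlongrightarrow> 0) F"
  shows "(f \<longlongrightarrow> 0) F"
  by (rule Lim_null_comparison[OF _ assms(3)]) (use assms(1,2) in simp)

lemma tendsto_onorm_0_iff:
  assumes "\<And>i. bop (G i)"
  shows "((\<lambda>i. onorm (G i)) \<longlongrightarrow> 0) F \<longleftrightarrow> (\<forall>\<epsilon>>0. eventually (\<lambda>i. onorm (G i) < \<epsilon>) F)"
  by (simp add: tendsto_iff dist_real_def bop_onorm_nonneg[OF assms])

lemma subspace_convergent_apply:
  assumes "\<And>i. bop (G i)"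
  shows "subspace {v. \<exists>y. ((\<lambda>i. G i v) \<longlongrightarrow> y) F}"
  unfolding subspace_def
proof (intro conjI ballI allI)
  show "0 \<in> {v. \<exists>y. ((\<lambda>i. G i v) \<longlongrightarrow> y) F}" using assms by (auto simp: bop_zero_apply)
next
  fix x y assume "x \<in> {v. \<exists>y. ((\<lambda>i. G i v) \<longlongrightarrow> y) F}" "y \<in> {v. \<exists>y. ((\<lambda>i. G i v) \<longlongrightarrow> y) F}"
  then show "x + y \<in> {v. \<exists>y. ((\<lambda>i. G i v) \<longlongrightarrow> y) F}"
    using assms by (auto simp: bop_add_apply intro: tendsto_add)
next
  fix c x assume "x \<in> {v. \<exists>y. ((\<lambda>i. G i v) \<longlongrightarrow> y) F}"
  then show "c *\<^sub>R x \<in> {v. \<exists>y. ((\<lambda>i. G i v) \<longlongrightarrow> y) F}"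
    by (force simp: bop_scaleR_apply[OF assms] intro: tendsto_scaleR[OF tendsto_const])
qed

lemma dist_apply_le: "bop T \<Longrightarrow> onorm T \<le> B \<Longrightarrow> dist (T v) (T w) \<le> B * dist v w"
  using bop_norm[of T "v - w"] mult_right_mono[of "onorm T" B "norm (v - w)"]
  by (simp add: dist_norm bop_diff_apply)

lemma closed_convergent_apply:
  fixes G :: "'i \<Rightarrow> 'h::chilbert_space \<Rightarrow> 'h"
  assumes G: "\<And>i. bop (G i)" "\<And>i. onorm (G i) \<le> B" and "F \<noteq> bot"
  shows "closed {v. \<exists>y. ((\<lambda>i. G i v) \<longlongrightarrow> y) F}"
  unfolding closure_subset_eq[symmetric]
proof
  fix v assume v: "v \<in> closure {v. \<exists>y. ((\<lambda>i. G i v) \<longlongrightarrow> y) F}"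
  have B: "0 \<le> B" by (rule order_trans[OF bop_onorm_nonneg[OF G(1)] G(2)])
  \<comment> \<open>Equicontinuity: \<open>G i v\<close> stays uniformly close to the convergent net \<open>G i w\<close> for \<open>w\<close> near \<open>v\<close>.\<close>
  have "cauchy_filter (filtermap (\<lambda>i. G i v) F)"
    unfolding cauchy_filter_metric_filtermap
  proof (intro allI impI)
    fix \<epsilon> :: real assume "\<epsilon> > 0"
    then have "\<epsilon> / (4 * (B + 1)) > 0" using B by simp
    then obtain w where "w \<in> {v. \<exists>y. ((\<lambda>i. G i v) \<longlongrightarrow> y) F}" and w: "dist w v < \<epsilon> / (4 * (B + 1))"
      using v unfolding closure_approachable by blast
    then obtain y where y: "((\<lambda>i. G i w) \<longlongrightarrow> y) F" by blast
    have ev: "eventually (\<lambda>i. dist (G i w) y < \<epsilon> / 4) F"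
      using tendsto_iff[THEN iffD1, OF y, rule_format, of "\<epsilon> / 4"] \<open>\<epsilon> > 0\<close> by simp
    have near: "dist (G i v) (G i w) < \<epsilon> / 4" for i
    proof -
      have "dist (G i v) (G i w) \<le> B * dist v w" by (rule dist_apply_le[OF G(1) G(2)])
      also have "\<dots> \<le> (B + 1) * dist v w" by (rule mult_right_mono) simp_all
      also have "\<dots> < (B + 1) * (\<epsilon> / (4 * (B + 1)))"
        using w B by (intro mult_strict_left_mono) (simp_all add: dist_commute)
      also have "\<dots> = \<epsilon> / 4" using B by (simp add: field_simps)
      finally show ?thesis .
    qed
    show "\<exists>P. eventually P F \<and> (\<forall>i j. P i \<and> P j \<longrightarrow> dist (G i v) (G j v) < \<epsilon>)"
    proof (intro exI conjI allI impI, fact ev)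
      fix i j assume "dist (G i w) y < \<epsilon> / 4 \<and> dist (G j w) y < \<epsilon> / 4"
      then show "dist (G i v) (G j v) < \<epsilon>"
        using near[of i] near[of j] dist_triangle[of "G i v" "G j v" "G i w"]
          dist_triangle[of "G i w" "G j v" y] dist_triangle[of y "G j v" "G j w"]
        by (simp add: dist_commute)
    qed
  qed
  moreover have "filtermap (\<lambda>i. G i v) F \<noteq> bot" using \<open>F \<noteq> bot\<close> by (simp add: filtermap_bot_iff)
  ultimately show "v \<in> {v. \<exists>y. ((\<lambda>i. G i v) \<longlongrightarrow> y) F}"
    using cauchy_filter_complete_converges[OF _ complete_UNIV] by (auto simp: filterlim_def)
qed

lemma convergent_apply_dense_span:
  fixes G :: "'i \<Rightarrow> 'h::chilbert_space \<Rightarrow> 'h"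
  assumes G: "\<And>i. bop (G i)" "\<And>i. onorm (G i) \<le> B" and "F \<noteq> bot"
    and dense: "closure (span D) = UNIV"
    and conv: "\<And>v. v \<in> D \<Longrightarrow> \<exists>y. ((\<lambda>i. G i v) \<longlongrightarrow> y) F"
  shows "\<exists>y. ((\<lambda>i. G i v) \<longlongrightarrow> y) F"
proof -
  have "span D \<subseteq> {w. \<exists>y. ((\<lambda>i. G i w) \<longlongrightarrow> y) F}"
    by (rule span_minimal[OF _ subspace_convergent_apply[OF G(1)]]) (use conv in blast)
  then have "closure (span D) \<subseteq> {w. \<exists>y. ((\<lambda>i. G i w) \<longlongrightarrow> y) F}"
    by (rule closure_minimal[OF _ closed_convergent_apply[OF G \<open>F \<noteq> bot\<close>]])
  then show ?thesis using dense by blast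
qed

lemma bop_pointwise_limit:
  assumes G: "\<And>i. bop (G i)" and bound: "eventually (\<lambda>i. onorm (G i) \<le> B) F" and "F \<noteq> bot"
    and lim: "\<And>v. ((\<lambda>i. G i v) \<longlongrightarrow> T v) F"
  shows "bop T" "onorm T \<le> B"
proof -
  obtain i where "onorm (G i) \<le> B" using eventually_happens'[OF \<open>F \<noteq> bot\<close> bound] by blast
  then have "0 \<le> B" using bop_onorm_nonneg[OF G, of i] by linarith
  have Tnorm: "norm (T v) \<le> B * norm v" for v
  proof (rule Lim_norm_ubound[OF _ lim])
    show "\<not> trivial_limit F" using \<open>F \<noteq> bot\<close> by (simp add: trivial_limit_def)
    show "eventually (\<lambda>i. norm (G i v) \<le> B * norm v) F"
      using bound
    proof eventually_elim
      case (elim i)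
      then show ?case using bop_norm[OF G, of i v] mult_right_mono[OF elim, of "norm v"] by simp
    qed
  qed
  have Tadd: "T (x + y) = T x + T y" for x y
    by (rule tendsto_unique[OF \<open>F \<noteq> bot\<close> lim])
       (use tendsto_add[OF lim[of x] lim[of y]] in \<open>simp add: bop_add_apply[OF G]\<close>)
  have Tscale: "T (scaleC c x) = scaleC c (T x)" for c x
    by (rule tendsto_unique[OF \<open>F \<noteq> bot\<close> lim])
       (use bounded_linear.tendsto[OF scaleC_bounded_linear lim[of x]] in \<open>simp add: bopD(2)[OF G]\<close>)
  show "bop T"
    unfolding bop_def
  proof (intro conjI allI bounded_linear_intro[where K=B])
    show "norm (T x) \<le> norm x * B" for x using Tnorm[of x] by (simp add: mult.commute)
  qed (simp_all add: Tadd Tscale scaleR_scaleC)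
  show "onorm T \<le> B" by (rule onorm_bound[OF \<open>0 \<le> B\<close> Tnorm])
qed

lemma onorm_pointwise_limit_le:
  assumes G: "\<And>i. bop (G i)" and "F \<noteq> bot" and "bop T"
    and lim: "\<And>v. ((\<lambda>i. G i v) \<longlongrightarrow> T v) F" and L: "((\<lambda>i. onorm (G i)) \<longlongrightarrow> L) F"
  shows "onorm T \<le> L"
proof (rule onorm_bound)
  show "0 \<le> L" by (rule tendsto_lowerbound[OF L]) (use G \<open>F \<noteq> bot\<close> in \<open>auto simp: bop_onorm_nonneg\<close>)
  show "norm (T v) \<le> L * norm v" for v
    by (rule tendsto_le[OF \<open>F \<noteq> bot\<close> tendsto_mult[OF L tendsto_const] tendsto_norm[OF lim]])
       (use bop_norm[OF G] in auto)
qed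

lemma Cauchy_apply_of_onorm_Cauchy:
  assumes \<sigma>: "\<And>n. bop (\<sigma> n)"
    and Cauchy: "\<And>\<epsilon>. \<epsilon> > 0 \<Longrightarrow> \<exists>N. \<forall>m n. N \<le> m \<longrightarrow> N \<le> n \<longrightarrow> onorm (\<lambda>x. \<sigma> m x - \<sigma> n x) < \<epsilon>"
  shows "Cauchy (\<lambda>n. \<sigma> n v)"
proof (rule metric_CauchyI)
  fix \<epsilon> :: real assume "\<epsilon> > 0"
  then have "0 < \<epsilon> / (norm v + 1)" by (intro divide_pos_pos) (auto intro: add_nonneg_pos)
  then obtain N where N: "\<And>m n. N \<le> m \<Longrightarrow> N \<le> n \<Longrightarrow> onorm (\<lambda>x. \<sigma> m x - \<sigma> n x) < \<epsilon> / (norm v + 1)"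
    using Cauchy by blast
  have "dist (\<sigma> m v) (\<sigma> n v) < \<epsilon>" if "N \<le> m" "N \<le> n" for m n
  proof -
    have "dist (\<sigma> m v) (\<sigma> n v) \<le> onorm (\<lambda>x. \<sigma> m x - \<sigma> n x) * norm v"
      using bop_norm[OF bop_diff[OF \<sigma> \<sigma>]] by (simp add: dist_norm)
    also have "\<dots> \<le> \<epsilon> / (norm v + 1) * norm v"
      using N[OF that] by (intro mult_right_mono) auto
    also have "\<dots> < \<epsilon>" using \<open>\<epsilon> > 0\<close> by (simp add: field_simps add_pos_nonneg)
    finally show ?thesis .
  qed
  then show "\<exists>M. \<forall>m\<ge>M. \<forall>n\<ge>M. dist (\<sigma> m v) (\<sigma> n v) < \<epsilon>" by blast
qed

lemma bop_onorm_Cauchy_limit: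
  fixes \<sigma> :: "nat \<Rightarrow> 'h::chilbert_space \<Rightarrow> 'h"
  assumes \<sigma>: "\<And>n. bop (\<sigma> n)"
    and Cauchy: "\<And>\<epsilon>. \<epsilon> > 0 \<Longrightarrow> \<exists>N. \<forall>m n. N \<le> m \<longrightarrow> N \<le> n \<longrightarrow> onorm (\<lambda>x. \<sigma> m x - \<sigma> n x) < \<epsilon>"
  shows "\<exists>T. bop T \<and> (\<forall>\<epsilon>>0. \<exists>N. \<forall>n\<ge>N. onorm (\<lambda>x. T x - \<sigma> n x) \<le> \<epsilon>)"
proof -
  have "Cauchy (\<lambda>n. \<sigma> n v)" for v
    by (rule Cauchy_apply_of_onorm_Cauchy[OF \<sigma> Cauchy])
  define T where "T v = lim (\<lambda>n. \<sigma> n v)" for v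
  have lim: "(\<lambda>n. \<sigma> n v) \<longlonglongrightarrow> T v" for v
    using \<open>\<And>v. Cauchy (\<lambda>n. \<sigma> n v)\<close> by (simp add: T_def Cauchy_convergent_iff convergent_LIMSEQ_iff)
  obtain N1 where N1: "\<And>n. N1 \<le> n \<Longrightarrow> onorm (\<lambda>x. \<sigma> n x - \<sigma> N1 x) < 1"
    using Cauchy[of 1] by auto
  have "onorm (\<sigma> n) \<le> onorm (\<sigma> N1) + 1" if "N1 \<le> n" for n
    using onorm_add_le[OF bop_diff[OF \<sigma> \<sigma>] \<sigma>, of n N1 N1] N1[OF that] by simp
  then have "eventually (\<lambda>n. onorm (\<sigma> n) \<le> onorm (\<sigma> N1) + 1) sequentially"
    unfolding eventually_sequentially by blast
  then have "bop T" using bop_pointwise_limit(1)[OF \<sigma> _ sequentially_bot lim] by blast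
  moreover have "\<exists>N. \<forall>n\<ge>N. onorm (\<lambda>x. T x - \<sigma> n x) \<le> \<epsilon>" if \<epsilon>: "\<epsilon> > 0" for \<epsilon>
  proof -
    obtain N where N: "\<And>m n. N \<le> m \<Longrightarrow> N \<le> n \<Longrightarrow> onorm (\<lambda>x. \<sigma> m x - \<sigma> n x) < \<epsilon>"
      using Cauchy[OF \<epsilon>] by blast
    have "onorm (\<lambda>x. T x - \<sigma> n x) \<le> \<epsilon>" if "N \<le> n" for n
    proof (rule bop_pointwise_limit(2))
      show "((\<lambda>m. \<sigma> m v - \<sigma> n v) \<longlongrightarrow> T v - \<sigma> n v) sequentially" for v
        by (intro tendsto_intros lim)
      show "eventually (\<lambda>m. onorm (\<lambda>x. \<sigma> m x - \<sigma> n x) \<le> \<epsilon>) sequentially"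
        using N that unfolding eventually_sequentially by (blast intro: less_imp_le)
    qed (simp_all add: bop_diff[OF \<sigma> \<sigma>])
    then show ?thesis by blast
  qed
  ultimately show ?thesis by blast
qed

section \<open>Strict convergence along the ultrafilter\<close>

locale multiplier_setting =
  fixes A :: "('h::chilbert_space \<Rightarrow> 'h) set"
    and le :: "'i \<Rightarrow> 'i \<Rightarrow> bool"
    and e :: "'i \<Rightarrow> 'h \<Rightarrow> 'h"
    and U :: "'i filter"
  assumes cstar: "cstar_subalg A"
    and nondeg: "nondegenerate A"
    and e_approx_unit: "approx_unit A le e"
    and e_bounded: "\<exists>C. \<forall>i. onorm (e i) \<le> C"
    and ultra: "ultrafilter U"
    and cofinal: "cofinal le U"
begin

lemma A_bop: "a \<in> A \<Longrightarrow> bop a"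
  using cstar by (auto simp: cstar_subalg_def)

lemma A_zero: "(\<lambda>x. 0) \<in> A"
  using cstar by (auto simp: cstar_subalg_def)

lemma A_add: "a \<in> A \<Longrightarrow> b \<in> A \<Longrightarrow> (\<lambda>x. a x + b x) \<in> A"
  using cstar by (auto simp: cstar_subalg_def)

lemma A_comp: "a \<in> A \<Longrightarrow> b \<in> A \<Longrightarrow> (\<lambda>x. a (b x)) \<in> A"
  using cstar unfolding cstar_subalg_def comp_def by blast

lemma A_scaleC: "a \<in> A \<Longrightarrow> (\<lambda>x. scaleC c (a x)) \<in> A"
  using cstar by (auto simp: cstar_subalg_def)

lemma A_adj: "a \<in> A \<Longrightarrow> adj a \<in> A"
  using cstar by (auto simp: cstar_subalg_def)

lemma A_closed: "bop T \<Longrightarrow> (\<And>\<epsilon>. \<epsilon> > 0 \<Longrightarrow> \<exists>S\<in>A. onorm (\<lambda>x. T x - S x) < \<epsilon>) \<Longrightarrow> T \<in> A"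
  using cstar unfolding cstar_subalg_def by blast

lemma A_diff: "a \<in> A \<Longrightarrow> b \<in> A \<Longrightarrow> (\<lambda>x. a x - b x) \<in> A"
  using A_add[of a "\<lambda>x. scaleC (-1) (b x)"] A_scaleC[of b "-1"] by simp

lemma A_scaleR: "a \<in> A \<Longrightarrow> (\<lambda>x. r *\<^sub>R a x) \<in> A"
  using A_scaleC[of a "complex_of_real r"] by (simp add: scaleR_scaleC)

lemma U_neq_bot: "U \<noteq> bot"
  using ultra by (simp add: ultrafilter_def)

lemma U_le_net_filter: "U \<le> net_filter le"
  unfolding net_filter_def
proof (rule INF_greatest)
  fix i0 show "U \<le> principal {i. le i0 i}"
    using cofinal by (simp add: cofinal_def le_principal)
qed

lemma approx_unit_tendsto:
  assumes "a \<in> A"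
  shows "((\<lambda>i. onorm (\<lambda>x. e i (a x) - a x)) \<longlongrightarrow> 0) U"
    "((\<lambda>i. onorm (\<lambda>x. a (e i x) - a x)) \<longlongrightarrow> 0) U"
  using e_approx_unit assms tendsto_mono[OF U_le_net_filter] by (auto simp: approx_unit_def)

lemma U_nontrivial: "\<not> trivial_limit U"
  using U_neq_bot by (simp add: trivial_limit_def)

lemma e_in_A: "e i \<in> A"
  using e_approx_unit by (simp add: approx_unit_def)

lemma e_bound_pos:
  obtains C where "C > 0" "\<And>i. onorm (e i) \<le> C"
proof -
  obtain C where "\<forall>i. onorm (e i) \<le> C" using e_bounded by blast
  then show thesis using that[of "max C 1"] by (simp add: le_max_iff_disj)
qed

lemma onorm_le_of_approx_unit:
  assumes l: "l \<in> A" and M: "\<And>i. onorm (\<lambda>h. e i (l h)) \<le> M"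
  shows "onorm l \<le> M"
proof (rule tendsto_le[OF U_neq_bot])
  show "((\<lambda>i. M + onorm (\<lambda>h. e i (l h) - l h)) \<longlongrightarrow> M) U"
    using tendsto_add[OF tendsto_const approx_unit_tendsto(1)[OF l]] by simp
  have "onorm l \<le> M + onorm (\<lambda>h. e i (l h) - l h)" for i
  proof -
    have el: "bop (\<lambda>h. e i (l h))" by (rule bop_comp[OF A_bop[OF e_in_A] A_bop[OF l]])
    have "onorm l = onorm (\<lambda>h. e i (l h) - (e i (l h) - l h))" by simp
    also have "\<dots> \<le> onorm (\<lambda>h. e i (l h)) + onorm (\<lambda>h. e i (l h) - l h)"
      by (rule onorm_diff_le[OF el bop_diff[OF el A_bop[OF l]]])
    finally show ?thesis using M[of i] by linarith
  qed
  then show "eventually (\<lambda>i. onorm l \<le> M + onorm (\<lambda>h. e i (l h) - l h)) U" by simp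
qed simp

lemma nondegenerate_zeroI:
  assumes T: "bop T" and z: "\<And>a h. a \<in> A \<Longrightarrow> T (a h) = 0"
  shows "T = (\<lambda>x. 0)"
proof -
  let ?Z = "{v. T v = 0}"
  have sub: "subspace ?Z"
    unfolding subspace_def using T by (simp add: bop_zero_apply bop_add_apply bop_scaleR_apply)
  have "span {a x |a x. a \<in> A} \<subseteq> ?Z"
    by (rule span_minimal[OF _ sub]) (use z in auto)
  moreover have "closed ?Z"
  proof -
    have "continuous_on UNIV T" using T
      by (simp add: bop_def linear_continuous_on)
    then show ?thesis by (intro closed_Collect_eq) auto
  qed
  ultimately have "closure (span {a x |a x. a \<in> A}) \<subseteq> ?Z" by (rule closure_minimal)
  then have "UNIV \<subseteq> ?Z" using nondeg by (simp add: nondegenerate_def)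
  then show ?thesis by auto
qed

lemma nondegenerate_eqI:
  assumes "bop S" "bop T" "\<And>a. a \<in> A \<Longrightarrow> (\<lambda>h. S (a h)) = (\<lambda>h. T (a h))"
  shows "S = T"
proof -
  have "(\<lambda>x. S x - T x) = (\<lambda>x. 0)"
    by (rule nondegenerate_zeroI[OF bop_diff[OF assms(1,2)]]) (metis assms(3) right_minus_eq)
  then show ?thesis by (simp add: fun_eq_iff)
qed

definition strict_tendsto :: "('i \<Rightarrow> 'h \<Rightarrow> 'h) \<Rightarrow> ('h \<Rightarrow> 'h) \<Rightarrow> bool" where
  "strict_tendsto F T \<longleftrightarrow> (\<forall>x\<in>A. ((\<lambda>i. onorm (\<lambda>h. F i (x h) - T (x h))) \<longlongrightarrow> 0) U \<and>
                                ((\<lambda>i. onorm (\<lambda>h. x (F i h) - x (T h))) \<longlongrightarrow> 0) U)"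

lemma strict_conv_iff_strict_tendsto:
  assumes "\<And>i. F i \<in> A" and "bop T"
  shows "strict_conv A U F T \<longleftrightarrow> strict_tendsto F T"
proof -
  have "((\<lambda>i. onorm (\<lambda>h. F i (x h) - T (x h))) \<longlongrightarrow> 0) U \<longleftrightarrow>
          (\<forall>\<epsilon>>0. eventually (\<lambda>i. onorm (\<lambda>h. F i (x h) - T (x h)) < \<epsilon>) U)"
    "((\<lambda>i. onorm (\<lambda>h. x (F i h) - x (T h))) \<longlongrightarrow> 0) U \<longleftrightarrow>
          (\<forall>\<epsilon>>0. eventually (\<lambda>i. onorm (\<lambda>h. x (F i h) - x (T h)) < \<epsilon>) U)"
    if "x \<in> A" for x
    using assms that by (simp_all add: tendsto_onorm_0_iff bop_comp_diff_right bop_comp_diff_left A_bop)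
  then show ?thesis
    unfolding strict_conv_def strict_tendsto_def eventually_conj_iff by blast
qed

lemma strict_tendsto_const: "a \<in> A \<Longrightarrow> strict_tendsto (\<lambda>i. a) a"
  by (simp add: strict_tendsto_def onorm_zero)

lemma strict_tendsto_add:
  assumes F: "\<And>i. F i \<in> A" and G: "\<And>i. G i \<in> A" and T: "bop T" and S: "bop S"
    and f: "strict_tendsto F T" and g: "strict_tendsto G S"
  shows "strict_tendsto (\<lambda>i h. F i h + G i h) (\<lambda>h. T h + S h)"
  unfolding strict_tendsto_def
proof (intro ballI conjI)
  fix x assume x: "x \<in> A"
  have bx: "bop x" by (rule A_bop[OF x])
  have bF: "bop (F i)" "bop (G i)" for i by (simp_all add: A_bop F G)
  show "((\<lambda>i. onorm (\<lambda>h. (F i (x h) + G i (x h)) - (T (x h) + S (x h)))) \<longlongrightarrow> 0) U"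
  proof (rule tendsto_0_le)
    fix i
    have eq: "(\<lambda>h. (F i (x h) + G i (x h)) - (T (x h) + S (x h))) = (\<lambda>h. (F i (x h) - T (x h)) + (G i (x h) - S (x h)))"
      by (simp add: algebra_simps)
    show "onorm (\<lambda>h. (F i (x h) + G i (x h)) - (T (x h) + S (x h))) \<le> onorm (\<lambda>h. F i (x h) - T (x h)) + onorm (\<lambda>h. G i (x h) - S (x h))"
      unfolding eq by (rule onorm_add_le[OF bop_comp_diff_right[OF bF(1) T bx] bop_comp_diff_right[OF bF(2) S bx]])
    show "0 \<le> onorm (\<lambda>h. (F i (x h) + G i (x h)) - (T (x h) + S (x h)))"
      by (rule bop_onorm_nonneg[OF bop_comp_diff_right[OF bop_add[OF bF] bop_add[OF T S] bx]])
    show "((\<lambda>i. onorm (\<lambda>h. F i (x h) - T (x h)) + onorm (\<lambda>h. G i (x h) - S (x h))) \<longlongrightarrow> 0) U"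
      using f g x unfolding strict_tendsto_def by (intro tendsto_add_zero) auto
  qed
  show "((\<lambda>i. onorm (\<lambda>h. x (F i h + G i h) - x (T h + S h))) \<longlongrightarrow> 0) U"
  proof (rule tendsto_0_le)
    fix i
    have eq: "(\<lambda>h. x (F i h + G i h) - x (T h + S h)) = (\<lambda>h. (x (F i h) - x (T h)) + (x (G i h) - x (S h)))"
      by (simp add: bop_add_apply[OF bx] algebra_simps)
    show "onorm (\<lambda>h. x (F i h + G i h) - x (T h + S h)) \<le> onorm (\<lambda>h. x (F i h) - x (T h)) + onorm (\<lambda>h. x (G i h) - x (S h))"
      unfolding eq by (rule onorm_add_le[OF bop_comp_diff_left[OF bF(1) T bx] bop_comp_diff_left[OF bF(2) S bx]])
    show "0 \<le> onorm (\<lambda>h. x (F i h + G i h) - x (T h + S h))"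
      by (rule bop_onorm_nonneg[OF bop_comp_diff_left[OF bop_add[OF bF] bop_add[OF T S] bx]])
    show "((\<lambda>i. onorm (\<lambda>h. x (F i h) - x (T h)) + onorm (\<lambda>h. x (G i h) - x (S h))) \<longlongrightarrow> 0) U"
      using f g x unfolding strict_tendsto_def by (intro tendsto_add_zero) auto
  qed
qed

lemma strict_tendsto_scaleC:
  assumes F: "\<And>i. F i \<in> A" and T: "bop T" and f: "strict_tendsto F T"
  shows "strict_tendsto (\<lambda>i h. scaleC c (F i h)) (\<lambda>h. scaleC c (T h))"
  unfolding strict_tendsto_def
proof (intro ballI conjI)
  fix x assume x: "x \<in> A"
  have bx: "bop x" by (rule A_bop[OF x])
  have bF: "bop (F i)" for i by (simp_all add: A_bop F)
  show "((\<lambda>i. onorm (\<lambda>h. scaleC c (F i (x h)) - scaleC c (T (x h)))) \<longlongrightarrow> 0) U"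
  proof (rule tendsto_0_le)
    fix i
    have eq: "(\<lambda>h. scaleC c (F i (x h)) - scaleC c (T (x h))) = (\<lambda>h. scaleC c (F i (x h) - T (x h)))"
      by (simp add: scaleC_diff_right)
    show "onorm (\<lambda>h. scaleC c (F i (x h)) - scaleC c (T (x h))) \<le> cmod c * onorm (\<lambda>h. F i (x h) - T (x h))"
      unfolding eq by (rule onorm_scaleC_le[OF bop_comp_diff_right[OF bF T bx]])
    show "0 \<le> onorm (\<lambda>h. scaleC c (F i (x h)) - scaleC c (T (x h)))"
      by (rule bop_onorm_nonneg[OF bop_comp_diff_right[OF bop_scaleC[OF bF] bop_scaleC[OF T] bx]])
    show "((\<lambda>i. cmod c * onorm (\<lambda>h. F i (x h) - T (x h))) \<longlongrightarrow> 0) U"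
      using f x unfolding strict_tendsto_def by (intro tendsto_mult_right_zero) auto
  qed
  show "((\<lambda>i. onorm (\<lambda>h. x (scaleC c (F i h)) - x (scaleC c (T h)))) \<longlongrightarrow> 0) U"
  proof (rule tendsto_0_le)
    fix i
    have eq: "(\<lambda>h. x (scaleC c (F i h)) - x (scaleC c (T h))) = (\<lambda>h. scaleC c (x (F i h) - x (T h)))"
      by (simp add: bopD(2)[OF bx] scaleC_diff_right)
    show "onorm (\<lambda>h. x (scaleC c (F i h)) - x (scaleC c (T h))) \<le> cmod c * onorm (\<lambda>h. x (F i h) - x (T h))"
      unfolding eq by (rule onorm_scaleC_le[OF bop_comp_diff_left[OF bF T bx]])
    show "0 \<le> onorm (\<lambda>h. x (scaleC c (F i h)) - x (scaleC c (T h)))"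
      by (rule bop_onorm_nonneg[OF bop_comp_diff_left[OF bop_scaleC[OF bF] bop_scaleC[OF T] bx]])
    show "((\<lambda>i. cmod c * onorm (\<lambda>h. x (F i h) - x (T h))) \<longlongrightarrow> 0) U"
      using f x unfolding strict_tendsto_def by (intro tendsto_mult_right_zero) auto
  qed
qed

lemma strict_tendsto_mult:
  assumes F: "\<And>i. F i \<in> A" and G: "\<And>i. G i \<in> A" and T: "bop T" and S: "bop S"
    and f: "strict_tendsto F T" and g: "strict_tendsto G S"
    and bF: "\<And>i. onorm (F i) \<le> CF" and bG: "\<And>i. onorm (G i) \<le> CG"
    and mS: "\<And>x. x \<in> A \<Longrightarrow> (\<lambda>h. S (x h)) \<in> A"
    and mT: "\<And>x. x \<in> A \<Longrightarrow> (\<lambda>h. x (T h)) \<in> A"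
  shows "strict_tendsto (\<lambda>i h. F i (G i h)) (\<lambda>h. T (S h))"
  unfolding strict_tendsto_def
proof (intro ballI conjI)
  fix x assume x: "x \<in> A"
  have bx: "bop x" by (rule A_bop[OF x])
  have bFi: "bop (F i)" and bGi: "bop (G i)" for i by (simp_all add: A_bop F G)
  show "((\<lambda>i. onorm (\<lambda>h. F i (G i (x h)) - T (S (x h)))) \<longlongrightarrow> 0) U"
  proof (rule tendsto_0_le)
    show "onorm (\<lambda>h. F i (G i (x h)) - T (S (x h)))
        \<le> CF * onorm (\<lambda>h. G i (x h) - S (x h)) + onorm (\<lambda>h. F i (S (x h)) - T (S (x h)))" for i
      by (rule onorm_comp_diff_le_right[OF bFi bop_comp[OF bGi bx] T bop_comp[OF S bx] bF])
    show "0 \<le> onorm (\<lambda>h. F i (G i (x h)) - T (S (x h)))" for i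
      by (rule bop_onorm_nonneg[OF bop_diff[OF bop_comp[OF bFi bop_comp[OF bGi bx]] bop_comp[OF T bop_comp[OF S bx]]]])
    show "((\<lambda>i. CF * onorm (\<lambda>h. G i (x h) - S (x h)) + onorm (\<lambda>h. F i (S (x h)) - T (S (x h)))) \<longlongrightarrow> 0) U"
      using g x f mS[OF x] unfolding strict_tendsto_def
      by (intro tendsto_add_zero tendsto_mult_right_zero) auto
  qed
  show "((\<lambda>i. onorm (\<lambda>h. x (F i (G i h)) - x (T (S h)))) \<longlongrightarrow> 0) U"
  proof (rule tendsto_0_le)
    show "onorm (\<lambda>h. x (F i (G i h)) - x (T (S h)))
        \<le> onorm (\<lambda>h. x (F i h) - x (T h)) * CG + onorm (\<lambda>h. x (T (G i h)) - x (T (S h)))" for i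
      by (rule onorm_comp_diff_le_left[OF bop_comp[OF bx bFi] bGi bop_comp[OF bx T] S bG])
    show "0 \<le> onorm (\<lambda>h. x (F i (G i h)) - x (T (S h)))" for i
      by (rule bop_onorm_nonneg[OF bop_diff[OF bop_comp[OF bx bop_comp[OF bFi bGi]] bop_comp[OF bx bop_comp[OF T S]]]])
    show "((\<lambda>i. onorm (\<lambda>h. x (F i h) - x (T h)) * CG + onorm (\<lambda>h. x (T (G i h)) - x (T (S h)))) \<longlongrightarrow> 0) U"
      using f x g mT[OF x] unfolding strict_tendsto_def
      by (intro tendsto_add_zero tendsto_mult_left_zero) auto
  qed
qed

lemma strict_tendsto_adj:
  assumes F: "\<And>i. F i \<in> A" and T: "bop T" and f: "strict_tendsto F T"
  shows "strict_tendsto (\<lambda>i. adj (F i)) (adj T)"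
  unfolding strict_tendsto_def
proof (intro ballI conjI)
  fix x assume x: "x \<in> A"
  have bx: "bop x" by (rule A_bop[OF x])
  have bax: "bop (adj x)" by (rule adj_bop[OF bx])
  have bFi: "bop (F i)" for i by (simp add: A_bop F)
  have e1: "(\<lambda>h. adj (F i) (x h) - adj T (x h)) = adj (\<lambda>h. adj x (F i h) - adj x (T h))" for i
    by (simp add: adj_diff[OF bop_comp[OF bax bFi] bop_comp[OF bax T]] adj_comp[OF bax bFi]
        adj_comp[OF bax T] adj_adj[OF bx])
  have e2: "(\<lambda>h. x (adj (F i) h) - x (adj T h)) = adj (\<lambda>h. F i (adj x h) - T (adj x h))" for i
    by (simp add: adj_diff[OF bop_comp[OF bFi bax] bop_comp[OF T bax]] adj_comp[OF bFi bax]
        adj_comp[OF T bax] adj_adj[OF bx])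
  have "((\<lambda>i. onorm (\<lambda>h. adj x (F i h) - adj x (T h))) \<longlongrightarrow> 0) U"
    using f A_adj[OF x] unfolding strict_tendsto_def by blast
  then show "((\<lambda>i. onorm (\<lambda>h. adj (F i) (x h) - adj T (x h))) \<longlongrightarrow> 0) U"
    unfolding e1 by (simp add: onorm_adj[OF bop_comp_diff_left[OF bFi T bax]])
  have "((\<lambda>i. onorm (\<lambda>h. F i (adj x h) - T (adj x h))) \<longlongrightarrow> 0) U"
    using f A_adj[OF x] unfolding strict_tendsto_def by blast
  then show "((\<lambda>i. onorm (\<lambda>h. x (adj (F i) h) - x (adj T h))) \<longlongrightarrow> 0) U"
    unfolding e2 by (simp add: onorm_adj[OF bop_comp_diff_right[OF bFi T bax]])
qed

lemma strict_tendsto_comp_in_A: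
  assumes F: "\<And>i. F i \<in> A" and T: "bop T" and f: "strict_tendsto F T" and x: "x \<in> A"
  shows "(\<lambda>h. T (x h)) \<in> A" "(\<lambda>h. x (T h)) \<in> A"
proof -
  have bx: "bop x" by (rule A_bop[OF x])
  show "(\<lambda>h. T (x h)) \<in> A"
  proof (rule A_closed[OF bop_comp[OF T bx]])
    fix \<epsilon> :: real assume \<epsilon>: "\<epsilon> > 0"
    have "((\<lambda>i. onorm (\<lambda>h. F i (x h) - T (x h))) \<longlongrightarrow> 0) U" using f x by (simp add: strict_tendsto_def)
    then have "eventually (\<lambda>i. onorm (\<lambda>h. F i (x h) - T (x h)) < \<epsilon>) U" using \<epsilon> by (rule order_tendstoD(2))
    then obtain i where i: "onorm (\<lambda>h. F i (x h) - T (x h)) < \<epsilon>" using eventually_happens'[OF U_neq_bot] by blast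
    show "\<exists>S\<in>A. onorm (\<lambda>y. T (x y) - S y) < \<epsilon>"
      by (rule bexI[of _ "\<lambda>h. F i (x h)"]) (use i onorm_diff_commute[of "\<lambda>h. F i (x h)" "\<lambda>h. T (x h)"] A_comp[OF F x] in auto)
  qed
  show "(\<lambda>h. x (T h)) \<in> A"
  proof (rule A_closed[OF bop_comp[OF bx T]])
    fix \<epsilon> :: real assume \<epsilon>: "\<epsilon> > 0"
    have "((\<lambda>i. onorm (\<lambda>h. x (F i h) - x (T h))) \<longlongrightarrow> 0) U" using f x by (simp add: strict_tendsto_def)
    then have "eventually (\<lambda>i. onorm (\<lambda>h. x (F i h) - x (T h)) < \<epsilon>) U" using \<epsilon> by (rule order_tendstoD(2))
    then obtain i where i: "onorm (\<lambda>h. x (F i h) - x (T h)) < \<epsilon>" using eventually_happens'[OF U_neq_bot] by blast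
    show "\<exists>S\<in>A. onorm (\<lambda>y. x (T y) - S y) < \<epsilon>"
      by (rule bexI[of _ "\<lambda>h. x (F i h)"]) (use i onorm_diff_commute[of "\<lambda>h. x (F i h)" "\<lambda>h. x (T h)"] A_comp[OF x F] in auto)
  qed
qed

lemma strict_tendsto_unique:
  assumes F: "\<And>i. F i \<in> A" and T: "bop T" and S: "bop S" and f: "strict_tendsto F T" and g: "strict_tendsto F S"
  shows "T = S"
proof (rule nondegenerate_eqI[OF T S])
  fix a assume a: "a \<in> A"
  have ba: "bop a" by (rule A_bop[OF a])
  have bFi: "bop (F i)" for i by (simp add: A_bop F)
  define c where "c = onorm (\<lambda>h. T (a h) - S (a h))"
  have c0: "0 \<le> c" unfolding c_def by (rule bop_onorm_nonneg[OF bop_comp_diff_right[OF T S ba]])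
  have "c \<le> 0"
  proof (rule tendsto_le[OF U_neq_bot])
    show "((\<lambda>i. onorm (\<lambda>h. F i (a h) - T (a h)) + onorm (\<lambda>h. F i (a h) - S (a h))) \<longlongrightarrow> 0) U"
      using f g a unfolding strict_tendsto_def by (intro tendsto_add_zero) auto
    show "((\<lambda>i. c) \<longlongrightarrow> c) U" by simp
    show "eventually (\<lambda>i. c \<le> onorm (\<lambda>h. F i (a h) - T (a h)) + onorm (\<lambda>h. F i (a h) - S (a h))) U"
    proof (rule always_eventually, rule allI)
      fix i
      have "c \<le> onorm (\<lambda>h. T (a h) - F i (a h)) + onorm (\<lambda>h. F i (a h) - S (a h))"
        unfolding c_def by (rule onorm_diff_triangle[OF bop_comp[OF T ba] bop_comp[OF bFi ba] bop_comp[OF S ba]])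
      then show "c \<le> onorm (\<lambda>h. F i (a h) - T (a h)) + onorm (\<lambda>h. F i (a h) - S (a h))"
        by (simp add: onorm_diff_commute[of "\<lambda>h. T (a h)"])
    qed
  qed
  then have "c = 0" using c0 by simp
  then have "(\<lambda>h. T (a h) - S (a h)) = (\<lambda>h. 0)"
    unfolding c_def by (simp add: onorm_eq_zero_iff[OF bop_comp_diff_right[OF T S ba]])
  then show "(\<lambda>h. T (a h)) = (\<lambda>h. S (a h))"
    by (metis (mono_tags) eq_iff_diff_eq_0)
qed

section \<open>The quotient \<open>A\<^sup>s\<^sup>U/J\<close>\<close>

lemma bfam_add: "bfam A F \<Longrightarrow> bfam A G \<Longrightarrow> bfam A (\<lambda>i h. F i h + G i h)"
proof -
  assume "bfam A F" "bfam A G"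
  then obtain CF CG where F: "\<And>i. F i \<in> A" "\<And>i. onorm (F i) \<le> CF"
    and G: "\<And>i. G i \<in> A" "\<And>i. onorm (G i) \<le> CG" by (auto simp: bfam_def)
  have "onorm (\<lambda>h. F i h + G i h) \<le> CF + CG" for i
    using onorm_add_le[OF A_bop[OF F(1)] A_bop[OF G(1)], of i i] F(2)[of i] G(2)[of i] by linarith
  then show ?thesis using A_add[OF F(1) G(1)] by (auto simp: bfam_def)
qed

lemma bfam_scaleC: "bfam A F \<Longrightarrow> bfam A (\<lambda>i h. scaleC c (F i h))"
proof -
  assume "bfam A F"
  then obtain CF where F: "\<And>i. F i \<in> A" "\<And>i. onorm (F i) \<le> CF" by (auto simp: bfam_def)
  have "onorm (\<lambda>h. scaleC c (F i h)) \<le> cmod c * CF" for i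
    using onorm_scaleC_le[OF A_bop[OF F(1)], of c i] mult_left_mono[OF F(2), of "cmod c" i] by simp
  then show ?thesis using A_scaleC[OF F(1)] by (auto simp: bfam_def)
qed

lemma bfam_comp: "bfam A F \<Longrightarrow> bfam A G \<Longrightarrow> bfam A (\<lambda>i h. F i (G i h))"
proof -
  assume "bfam A F" "bfam A G"
  then obtain CF CG where F: "\<And>i. F i \<in> A" "\<And>i. onorm (F i) \<le> CF"
    and G: "\<And>i. G i \<in> A" "\<And>i. onorm (G i) \<le> CG" by (auto simp: bfam_def)
  have "onorm (\<lambda>h. F i (G i h)) \<le> CF * CG" for i
  proof -
    have "onorm (\<lambda>h. F i (G i h)) \<le> onorm (F i) * onorm (G i)"
      by (rule onorm_comp_le[OF A_bop[OF F(1)] A_bop[OF G(1)]])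
    also have "\<dots> \<le> CF * CG"
      by (rule mult_mono[OF F(2) G(2) order_trans[OF bop_onorm_nonneg[OF A_bop[OF F(1)]] F(2)]
            bop_onorm_nonneg[OF A_bop[OF G(1)]]])
    finally show ?thesis .
  qed
  then show ?thesis using A_comp[OF F(1) G(1)] by (auto simp: bfam_def)
qed

lemma bfam_adj: "bfam A F \<Longrightarrow> bfam A (\<lambda>i. adj (F i))"
  unfolding bfam_def by (simp add: A_adj A_bop onorm_adj)

definition strict_limit :: "('i \<Rightarrow> 'h \<Rightarrow> 'h) \<Rightarrow> ('h \<Rightarrow> 'h) \<Rightarrow> bool" where
  "strict_limit F T \<longleftrightarrow> bfam A F \<and> bop T \<and> strict_tendsto F T"

lemma sU_fams_iff: "F \<in> sU_fams A U \<longleftrightarrow> (\<exists>T. strict_limit F T)"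
  unfolding sU_fams_def strict_limit_def bfam_def using strict_conv_iff_strict_tendsto by blast

lemma strict_limitD:
  assumes "strict_limit F T"
  shows "F i \<in> A" "bfam A F" "bop T" "strict_tendsto F T"
  using assms by (auto simp: strict_limit_def bfam_def)

lemma strict_limit_bound:
  assumes "strict_limit F T"
  obtains C where "\<And>i. onorm (F i) \<le> C"
  using assms by (auto simp: strict_limit_def bfam_def)

lemma strict_limit_const: "a \<in> A \<Longrightarrow> strict_limit (\<lambda>i. a) a"
  by (auto simp: strict_limit_def bfam_def strict_tendsto_const A_bop)

lemma strict_limit_add:
  assumes "strict_limit F T" "strict_limit G S"
  shows "strict_limit (\<lambda>i h. F i h + G i h) (\<lambda>h. T h + S h)"
  unfolding strict_limit_def
  using bfam_add[OF strict_limitD(2)[OF assms(1)] strict_limitD(2)[OF assms(2)]]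
    bop_add[OF strict_limitD(3)[OF assms(1)] strict_limitD(3)[OF assms(2)]]
    strict_tendsto_add[OF strict_limitD(1)[OF assms(1)] strict_limitD(1)[OF assms(2)]
      strict_limitD(3)[OF assms(1)] strict_limitD(3)[OF assms(2)] strict_limitD(4)[OF assms(1)]
      strict_limitD(4)[OF assms(2)]]
  by blast

lemma strict_limit_scaleC:
  assumes "strict_limit F T"
  shows "strict_limit (\<lambda>i h. scaleC c (F i h)) (\<lambda>h. scaleC c (T h))"
  unfolding strict_limit_def
  using bfam_scaleC[OF strict_limitD(2)[OF assms]] bop_scaleC[OF strict_limitD(3)[OF assms]]
    strict_tendsto_scaleC[OF strict_limitD(1)[OF assms] strict_limitD(3,4)[OF assms]]
  by blast

lemma strict_limit_diff:
  assumes "strict_limit F T" "strict_limit G S"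
  shows "strict_limit (\<lambda>i h. F i h - G i h) (\<lambda>h. T h - S h)"
  using strict_limit_add[OF assms(1) strict_limit_scaleC[OF assms(2), of "-1"]] by simp

lemma strict_limit_comp_in_A:
  assumes "strict_limit F T" "x \<in> A"
  shows "(\<lambda>h. T (x h)) \<in> A" "(\<lambda>h. x (T h)) \<in> A"
  using strict_tendsto_comp_in_A[OF strict_limitD(1,3,4)[OF assms(1)] assms(2)] by auto

lemma strict_limit_mult:
  assumes f: "strict_limit F T" and g: "strict_limit G S"
  shows "strict_limit (\<lambda>i h. F i (G i h)) (\<lambda>h. T (S h))"
proof -
  obtain CF CG where "\<And>i. onorm (F i) \<le> CF" "\<And>i. onorm (G i) \<le> CG"
    using strict_limit_bound[OF f] strict_limit_bound[OF g] by metis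
  then have "strict_tendsto (\<lambda>i h. F i (G i h)) (\<lambda>h. T (S h))"
    by (rule strict_tendsto_mult[OF strict_limitD(1)[OF f] strict_limitD(1)[OF g]
          strict_limitD(3)[OF f] strict_limitD(3)[OF g] strict_limitD(4)[OF f] strict_limitD(4)[OF g]])
       (simp_all add: strict_limit_comp_in_A[OF g] strict_limit_comp_in_A[OF f])
  then show ?thesis
    unfolding strict_limit_def
    using bfam_comp[OF strict_limitD(2)[OF f] strict_limitD(2)[OF g]]
      bop_comp[OF strict_limitD(3)[OF f] strict_limitD(3)[OF g]] by blast
qed

lemma strict_limit_adj:
  assumes "strict_limit F T"
  shows "strict_limit (\<lambda>i. adj (F i)) (adj T)"
  unfolding strict_limit_def
  using bfam_adj[OF strict_limitD(2)[OF assms]] adj_bop[OF strict_limitD(3)[OF assms]]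
    strict_tendsto_adj[OF strict_limitD(1)[OF assms] strict_limitD(3,4)[OF assms]] by blast

lemma strict_limit_unique: "strict_limit F T \<Longrightarrow> strict_limit F S \<Longrightarrow> T = S"
  by (rule strict_tendsto_unique[OF strict_limitD(1) strict_limitD(3) strict_limitD(3) strict_limitD(4)
        strict_limitD(4)])

lemma strict_conv_diff_zero_iff:
  assumes "strict_limit F T" "strict_limit G S"
  shows "strict_conv A U (\<lambda>i h. F i h - G i h) (\<lambda>h. 0) \<longleftrightarrow> T = S"
proof -
  note d = strict_limit_diff[OF assms]
  have "strict_conv A U (\<lambda>i h. F i h - G i h) (\<lambda>h. 0) \<longleftrightarrow> strict_limit (\<lambda>i h. F i h - G i h) (\<lambda>h. 0)"
    using strict_conv_iff_strict_tendsto[OF strict_limitD(1)[OF d] bop_zero] strict_limitD(2)[OF d]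
    by (simp add: strict_limit_def bop_zero)
  also have "\<dots> \<longleftrightarrow> (\<lambda>h. T h - S h) = (\<lambda>h. 0)"
    using d strict_limit_unique[OF d] by metis
  finally show ?thesis by (simp add: fun_eq_iff)
qed

text \<open>A class of \<open>A\<^sup>s\<^sup>U/J\<close> (a set of representing families) is determined by the common strict
  limit of its members, so \<open>Q A U\<close> is identified with \<open>strict_class ` multipliers\<close>.\<close>

definition strict_class :: "('h \<Rightarrow> 'h) \<Rightarrow> ('i \<Rightarrow> 'h \<Rightarrow> 'h) set" where
  "strict_class T = {G. strict_limit G T}"

definition multipliers :: "('h \<Rightarrow> 'h) set" where
  "multipliers = {T. \<exists>F. strict_limit F T}"

lemma multipliersI: "strict_limit F T \<Longrightarrow> T \<in> multipliers"
  by (auto simp: multipliers_def)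

lemma multipliers_bop: "T \<in> multipliers \<Longrightarrow> bop T"
  by (auto simp: multipliers_def strict_limit_def)

lemma multipliers_comp_in_A:
  "T \<in> multipliers \<Longrightarrow> x \<in> A \<Longrightarrow> (\<lambda>h. T (x h)) \<in> A \<and> (\<lambda>h. x (T h)) \<in> A"
  by (auto simp: multipliers_def dest: strict_limit_comp_in_A)

lemma A_subset_multipliers: "a \<in> A \<Longrightarrow> a \<in> multipliers"
  by (rule multipliersI[OF strict_limit_const])

lemma qclass_eq_strict_class:
  assumes "strict_limit F T"
  shows "qclass A U F = strict_class T"
  unfolding qclass_def strict_class_def sU_fams_iff
  using strict_conv_diff_zero_iff[OF assms] strict_limit_unique by blast

lemma Q_eq: "Q A U = strict_class ` multipliers"
proof
  show "Q A U \<subseteq> strict_class ` multipliers"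
    unfolding Q_def using qclass_eq_strict_class multipliersI by (auto simp: sU_fams_iff)
  show "strict_class ` multipliers \<subseteq> Q A U"
    unfolding Q_def multipliers_def using qclass_eq_strict_class sU_fams_iff by fastforce
qed

lemma strict_class_inj:
  assumes "T \<in> multipliers" "strict_class T = strict_class S"
  shows "T = S"
  using assms strict_limit_unique by (auto simp: multipliers_def strict_class_def)

lemma strict_limit_qrep:
  assumes "T \<in> multipliers"
  shows "strict_limit (qrep (strict_class T)) T"
proof -
  have "\<exists>F. F \<in> strict_class T" using assms by (auto simp: multipliers_def strict_class_def)
  then have "qrep (strict_class T) \<in> strict_class T" unfolding qrep_def by (rule someI_ex)
  then show ?thesis by (simp add: strict_class_def)
qed

lemma qzero_eq: "qzero A U = strict_class (\<lambda>h. 0)"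
  unfolding qzero_def using qclass_eq_strict_class[OF strict_limit_const[OF A_zero]] by simp

lemma qconst_eq: "a \<in> A \<Longrightarrow> qconst A U a = strict_class a"
  unfolding qconst_def by (rule qclass_eq_strict_class[OF strict_limit_const])

lemma qadd_eq:
  assumes "T \<in> multipliers" "S \<in> multipliers"
  shows "qadd A U (strict_class T) (strict_class S) = strict_class (\<lambda>h. T h + S h)"
    and "(\<lambda>h. T h + S h) \<in> multipliers"
  using strict_limit_add[OF strict_limit_qrep[OF assms(1)] strict_limit_qrep[OF assms(2)]]
  by (auto simp: qadd_def qclass_eq_strict_class multipliersI)

lemma qscale_eq:
  assumes "T \<in> multipliers"
  shows "qscale A U z (strict_class T) = strict_class (\<lambda>h. scaleC z (T h))"
    and "(\<lambda>h. scaleC z (T h)) \<in> multipliers"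
  using strict_limit_scaleC[OF strict_limit_qrep[OF assms], of z]
  by (auto simp: qscale_def qclass_eq_strict_class multipliersI)

lemma qmul_eq:
  assumes "T \<in> multipliers" "S \<in> multipliers"
  shows "qmul A U (strict_class T) (strict_class S) = strict_class (\<lambda>h. T (S h))"
    and "(\<lambda>h. T (S h)) \<in> multipliers"
  using strict_limit_mult[OF strict_limit_qrep[OF assms(1)] strict_limit_qrep[OF assms(2)]]
  by (auto simp: qmul_def qclass_eq_strict_class multipliersI)

lemma qstar_eq:
  assumes "T \<in> multipliers"
  shows "qstar A U (strict_class T) = strict_class (adj T)" and "adj T \<in> multipliers"
  using strict_limit_adj[OF strict_limit_qrep[OF assms]]
  by (auto simp: qstar_def qclass_eq_strict_class multipliersI)

lemma bounded_net_tendsto_apply: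
  assumes G: "\<And>i. bop (G i)" "\<And>i. onorm (G i) \<le> B"
    and gen: "\<And>a h. a \<in> A \<Longrightarrow> \<exists>y. ((\<lambda>i. G i (a h)) \<longlongrightarrow> y) U"
  shows "\<exists>T. bop T \<and> (\<forall>v. ((\<lambda>i. G i v) \<longlongrightarrow> T v) U)"
proof -
  have "\<exists>y. ((\<lambda>i. G i v) \<longlongrightarrow> y) U" for v
    by (rule convergent_apply_dense_span[OF G(1) G(2) U_neq_bot nondeg[unfolded nondegenerate_def]])
       (use gen in blast)
  then have lim: "((\<lambda>i. G i v) \<longlongrightarrow> Lim U (\<lambda>i. G i v)) U" for v
    using tendsto_Lim[OF U_nontrivial] by blast
  moreover have "eventually (\<lambda>i. onorm (G i) \<le> B) U" using G(2) by simp
  then have "bop (\<lambda>v. Lim U (\<lambda>i. G i v))" by (rule bop_pointwise_limit(1)[OF G(1) _ U_neq_bot lim])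
  ultimately show ?thesis by blast
qed

lemma strict_limit_tendsto_apply:
  assumes "strict_limit G T"
  shows "((\<lambda>i. G i v) \<longlongrightarrow> T v) U"
proof -
  note g = strict_limitD[OF assms]
  have gb: "\<And>i. bop (G i)" using A_bop g(1) by blast
  have gen: "((\<lambda>i. G i (a h)) \<longlongrightarrow> T (a h)) U" if "a \<in> A" for a h
  proof -
    have "((\<lambda>i. G i (a h) - T (a h)) \<longlongrightarrow> 0) U"
    proof (rule Lim_null_comparison)
      show "eventually (\<lambda>i. norm (G i (a h) - T (a h)) \<le> onorm (\<lambda>h. G i (a h) - T (a h)) * norm h) U"
        using bop_norm[OF bop_comp_diff_right[OF gb g(3) A_bop[OF that]]] by simp
      show "((\<lambda>i. onorm (\<lambda>h. G i (a h) - T (a h)) * norm h) \<longlongrightarrow> 0) U"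
        using g(4) that by (intro tendsto_mult_left_zero) (simp add: strict_tendsto_def)
    qed
    then show ?thesis by (simp add: LIM_zero_iff)
  qed
  obtain C where C: "\<And>i. onorm (G i) \<le> C" using strict_limit_bound[OF assms] by blast
  obtain T' where T': "bop T'" "\<And>v. ((\<lambda>i. G i v) \<longlongrightarrow> T' v) U"
    using bounded_net_tendsto_apply[of G C] gb C gen by blast
  have "T' = T"
    using T' gen by (intro nondegenerate_eqI[OF T'(1) g(3)]) (blast intro: tendsto_unique[OF U_neq_bot])
  then show ?thesis using T'(2) by simp
qed

lemma onorm_le_qnorm:
  assumes "T \<in> multipliers"
  shows "onorm T \<le> qnorm A U (strict_class T)"
  unfolding qnorm_def
proof (rule cInf_greatest)
  show "(\<lambda>G. Lim U (\<lambda>i. onorm (G i))) ` strict_class T \<noteq> {}"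
    using assms by (auto simp: multipliers_def strict_class_def)
next
  fix y assume "y \<in> (\<lambda>G. Lim U (\<lambda>i. onorm (G i))) ` strict_class T"
  then obtain G where G: "strict_limit G T" and y: "y = Lim U (\<lambda>i. onorm (G i))"
    by (auto simp: strict_class_def)
  obtain C where C: "\<And>i. onorm (G i) \<le> C" using strict_limit_bound[OF G] by blast
  have gb: "\<And>i. bop (G i)" using A_bop strict_limitD(1)[OF G] by blast
  have "\<bar>onorm (G i)\<bar> \<le> C" for i using bop_onorm_nonneg[OF gb[of i]] C[of i] by simp
  then obtain l where l: "((\<lambda>i. onorm (G i)) \<longlongrightarrow> l) U"
    using ultrafilter_bounded_tendsto[OF ultra, of "\<lambda>i. onorm (G i)" C] by blast
  have "onorm T \<le> l"
    using onorm_pointwise_limit_le[OF gb U_neq_bot strict_limitD(3)[OF G] strict_limit_tendsto_apply[OF G] l] .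
  then show "onorm T \<le> y" using y l U_neq_bot by (simp add: tendsto_Lim)
qed

lemma strict_class_eq_qzero_iff: "T \<in> multipliers \<Longrightarrow> strict_class T = qzero A U \<longleftrightarrow> T = (\<lambda>h. 0)"
  using strict_class_inj qzero_eq by metis

lemma qclosed_A_classes: "qclosed A U (strict_class ` A)"
  unfolding qclosed_def
proof (intro ballI impI)
  fix c assume c: "c \<in> Q A U"
    and app: "\<forall>\<epsilon>>0. \<exists>d\<in>strict_class ` A. qnorm A U (qadd A U c (qscale A U (-1) d)) < \<epsilon>"
  from c obtain T where T: "T \<in> multipliers" "c = strict_class T" by (auto simp: Q_eq)
  have "T \<in> A"
  proof (rule A_closed[OF multipliers_bop[OF T(1)]])
    fix \<epsilon> :: real assume "\<epsilon> > 0"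
    with app obtain a where a: "a \<in> A" and lt: "qnorm A U (qadd A U (strict_class T) (qscale A U (-1) (strict_class a))) < \<epsilon>"
      using T(2) by blast
    have ma: "(\<lambda>h. scaleC (-1) (a h)) \<in> multipliers" by (rule qscale_eq(2)[OF A_subset_multipliers[OF a]])
    have eq: "qadd A U (strict_class T) (qscale A U (-1) (strict_class a)) = strict_class (\<lambda>h. T h - a h)"
      using qadd_eq(1)[OF T(1) ma] qscale_eq(1)[OF A_subset_multipliers[OF a]] by simp
    have mb: "(\<lambda>h. T h - a h) \<in> multipliers"
      using qadd_eq(2)[OF T(1) ma] by simp
    have "onorm (\<lambda>h. T h - a h) < \<epsilon>" using onorm_le_qnorm[OF mb] lt eq by simp
    then show "\<exists>S\<in>A. onorm (\<lambda>x. T x - S x) < \<epsilon>" using a by blast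
  qed
  then show "c \<in> strict_class ` A" using T(2) by blast
qed

lemma q_ideal_A: "q_ideal A U (strict_class ` A)"
  unfolding q_ideal_def
proof (intro conjI ballI allI)
  show "strict_class ` A \<subseteq> Q A U" using A_subset_multipliers by (auto simp: Q_eq)
  show "qzero A U \<in> strict_class ` A" using qzero_eq A_zero by blast
next
  fix c d assume "c \<in> strict_class ` A" "d \<in> strict_class ` A"
  then obtain a b where a: "a \<in> A" "c = strict_class a" and b: "b \<in> A" "d = strict_class b" by blast
  show "qadd A U c d \<in> strict_class ` A"
    using a b qadd_eq[OF A_subset_multipliers[OF a(1)] A_subset_multipliers[OF b(1)]] A_add[OF a(1) b(1)] by auto
next
  fix z c assume "c \<in> strict_class ` A"
  then obtain a where a: "a \<in> A" "c = strict_class a" by blast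
  show "qscale A U z c \<in> strict_class ` A"
    using a qscale_eq[OF A_subset_multipliers[OF a(1)]] A_scaleC[OF a(1)] by auto
next
  fix c d assume "c \<in> Q A U" "d \<in> strict_class ` A"
  then obtain T a where T: "T \<in> multipliers" "c = strict_class T" and a: "a \<in> A" "d = strict_class a" by (auto simp: Q_eq)
  show "qmul A U c d \<in> strict_class ` A"
    using T a qmul_eq[OF T(1) A_subset_multipliers[OF a(1)]] multipliers_comp_in_A[OF T(1) a(1)] by auto
  show "qmul A U d c \<in> strict_class ` A"
    using T a qmul_eq[OF A_subset_multipliers[OF a(1)] T(1)] multipliers_comp_in_A[OF T(1) a(1)] by auto
next
  show "qclosed A U (strict_class ` A)" by (rule qclosed_A_classes)
qed

lemma qconst_image: "qconst A U ` A = strict_class ` A"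
  by (simp add: qconst_eq)

lemma q_essential_ideal_A: "q_essential_ideal A U (qconst A U ` A)"
  unfolding q_essential_ideal_def qconst_image
proof (intro conjI allI impI q_ideal_A)
  fix S' assume h: "q_ideal A U S' \<and> S' \<noteq> {qzero A U}"
  then have sub: "S' \<subseteq> Q A U" and z: "qzero A U \<in> S'"
    and mul: "\<forall>c\<in>Q A U. \<forall>d\<in>S'. qmul A U c d \<in> S' \<and> qmul A U d c \<in> S'"
    by (auto simp: q_ideal_def)
  from h z obtain c where c: "c \<in> S'" "c \<noteq> qzero A U" by blast
  with sub obtain T where T: "T \<in> multipliers" "c = strict_class T" by (auto simp: Q_eq)
  have T0: "T \<noteq> (\<lambda>h. 0)" using c T strict_class_eq_qzero_iff by blast
  have "\<exists>a\<in>A. (\<lambda>h. T (a h)) \<noteq> (\<lambda>h. 0)"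
  proof (rule ccontr)
    assume "\<not> ?thesis"
    then have "\<And>a h. a \<in> A \<Longrightarrow> T (a h) = 0" by (metis (mono_tags))
    then have "T = (\<lambda>h. 0)" by (rule nondegenerate_zeroI[OF multipliers_bop[OF T(1)]])
    with T0 show False by simp
  qed
  then obtain a where a: "a \<in> A" "(\<lambda>h. T (a h)) \<noteq> (\<lambda>h. 0)" by blast
  have "qmul A U c (strict_class a) \<in> S'" using mul c(1) A_subset_multipliers[OF a(1)] by (auto simp: Q_eq)
  moreover have qm: "qmul A U c (strict_class a) = strict_class (\<lambda>h. T (a h))" using qmul_eq[OF T(1) A_subset_multipliers[OF a(1)]] T(2) by simp
  moreover have "(\<lambda>h. T (a h)) \<in> A" using multipliers_comp_in_A[OF T(1) a(1)] by simp
  moreover have "strict_class (\<lambda>h. T (a h)) \<noteq> qzero A U"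
    using strict_class_eq_qzero_iff[OF A_subset_multipliers[OF \<open>(\<lambda>h. T (a h)) \<in> A\<close>]] a(2) by simp
  ultimately show "strict_class ` A \<inter> S' \<noteq> {qzero A U}" by blast
qed

section \<open>\<open>A\<close> as a Banach space\<close>

definition op_dist :: "('h \<Rightarrow> 'h) \<Rightarrow> ('h \<Rightarrow> 'h) \<Rightarrow> real" where
  "op_dist S T = \<bar>onorm (\<lambda>x. S x - T x)\<bar>"

lemma op_dist_A: "S \<in> A \<Longrightarrow> T \<in> A \<Longrightarrow> op_dist S T = onorm (\<lambda>x. S x - T x)"
  unfolding op_dist_def using bop_onorm_nonneg[OF bop_diff[OF A_bop A_bop]] by simp

lemma Metric_space_A: "Metric_space A op_dist"
proof
  show "0 \<le> op_dist x y" for x y by (simp add: op_dist_def)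
  show "op_dist x y = op_dist y x" for x y by (simp only: op_dist_def onorm_diff_commute[of x y])
  show "op_dist x y = 0 \<longleftrightarrow> x = y" if "x \<in> A" "y \<in> A" for x y
    using that by (simp add: op_dist_A onorm_eq_zero_iff[OF bop_diff[OF A_bop A_bop]] fun_eq_iff)
  show "op_dist x z \<le> op_dist x y + op_dist y z" if "x \<in> A" "y \<in> A" "z \<in> A" for x y z
    using that by (simp add: op_dist_A onorm_diff_triangle A_bop)
qed

interpretation A_metric: Metric_space A op_dist by (rule Metric_space_A)

lemma A_mcomplete: "A_metric.mcomplete"
  unfolding A_metric.mcomplete_def
proof (intro allI impI)
  fix \<sigma> :: "nat \<Rightarrow> 'h \<Rightarrow> 'h" assume C: "A_metric.MCauchy \<sigma>"
  then have \<sigma>: "\<And>n. \<sigma> n \<in> A" by (auto simp: A_metric.MCauchy_def)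
  with C have Cauchy: "\<And>\<epsilon>. \<epsilon> > 0 \<Longrightarrow> \<exists>N. \<forall>m n. N \<le> m \<longrightarrow> N \<le> n \<longrightarrow> onorm (\<lambda>x. \<sigma> m x - \<sigma> n x) < \<epsilon>"
    by (simp add: A_metric.MCauchy_def op_dist_A)
  moreover have "\<And>n. bop (\<sigma> n)" using A_bop \<sigma> by blast
  ultimately obtain T where T: "bop T" and lim: "\<And>\<epsilon>. \<epsilon> > 0 \<Longrightarrow> \<exists>N. \<forall>n\<ge>N. onorm (\<lambda>x. T x - \<sigma> n x) \<le> \<epsilon>"
    using bop_onorm_Cauchy_limit[of \<sigma>] by blast
  have half: "\<exists>N. \<forall>n\<ge>N. onorm (\<lambda>x. T x - \<sigma> n x) < \<epsilon>" if "\<epsilon> > 0" for \<epsilon>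
  proof -
    obtain N where N: "\<And>n. N \<le> n \<Longrightarrow> onorm (\<lambda>x. T x - \<sigma> n x) \<le> \<epsilon> / 2"
      using lim[of "\<epsilon> / 2"] \<open>\<epsilon> > 0\<close> by auto
    have "onorm (\<lambda>x. T x - \<sigma> n x) < \<epsilon>" if "N \<le> n" for n using N[OF that] \<open>\<epsilon> > 0\<close> by linarith
    then show ?thesis by blast
  qed
  have "T \<in> A"
    by (rule A_closed[OF T]) (use half \<sigma> in blast)
  moreover have "\<exists>N. \<forall>n\<ge>N. \<sigma> n \<in> A \<and> op_dist (\<sigma> n) T < \<epsilon>" if "\<epsilon> > 0" for \<epsilon>
    using half[OF that] \<sigma> \<open>T \<in> A\<close> by (simp add: op_dist_A onorm_diff_commute[of "\<sigma> _"])
  ultimately show "\<exists>x. limitin A_metric.mtopology \<sigma> x sequentially"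
    unfolding A_metric.limit_metric_sequentially by blast
qed

lemma closedin_onorm_sublevel:
  assumes W: "\<And>w. w \<in> W \<Longrightarrow> bop w"
  shows "closedin A_metric.mtopology {a \<in> A. \<forall>w\<in>W. onorm (\<lambda>h. w (a h)) \<le> c}"
  unfolding A_metric.metric_closedin_iff_sequentially_closed
proof (intro conjI allI impI subsetI)
  fix \<sigma> l assume h: "range \<sigma> \<subseteq> {a \<in> A. \<forall>w\<in>W. onorm (\<lambda>h. w (a h)) \<le> c} \<and> limitin A_metric.mtopology \<sigma> l sequentially"
  then have \<sigma>: "\<And>k. \<sigma> k \<in> A" "\<And>k w. w \<in> W \<Longrightarrow> onorm (\<lambda>h. w (\<sigma> k h)) \<le> c" by auto
  from h have "l \<in> A" and lim: "\<And>\<epsilon>. \<epsilon> > 0 \<Longrightarrow> \<exists>N. \<forall>k\<ge>N. \<sigma> k \<in> A \<and> op_dist (\<sigma> k) l < \<epsilon>"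
    unfolding A_metric.limit_metric_sequentially by auto
  have "onorm (\<lambda>h. w (l h)) \<le> c" if w: "w \<in> W" for w
  proof (rule field_le_epsilon)
    fix \<epsilon> :: real assume "\<epsilon> > 0"
    have w0: "0 \<le> onorm w" by (rule bop_onorm_nonneg[OF W[OF w]])
    obtain k where k: "op_dist (\<sigma> k) l < \<epsilon> / (onorm w + 1)"
      using lim[of "\<epsilon> / (onorm w + 1)"] \<open>\<epsilon> > 0\<close> w0 by auto
    have bl: "bop l" and bk: "bop (\<sigma> k)" using A_bop \<open>l \<in> A\<close> \<sigma>(1) by blast+
    \<comment> \<open>Composing with \<open>w\<close> is Lipschitz in operator norm, with constant \<open>onorm w\<close>.\<close>
    have "onorm (\<lambda>h. w (l h)) = onorm (\<lambda>h. w (\<sigma> k h) + w (l h - \<sigma> k h))"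
      by (simp add: bop_diff_apply[OF W[OF w]])
    also have "\<dots> \<le> onorm (\<lambda>h. w (\<sigma> k h)) + onorm (\<lambda>h. w (l h - \<sigma> k h))"
      by (rule onorm_add_le[OF bop_comp[OF W[OF w] bk] bop_comp[OF W[OF w] bop_diff[OF bl bk]]])
    also have "onorm (\<lambda>h. w (l h - \<sigma> k h)) \<le> onorm w * op_dist (\<sigma> k) l"
      using onorm_comp_le[OF W[OF w] bop_diff[OF bl bk]]
      by (simp add: op_dist_A[OF \<sigma>(1) \<open>l \<in> A\<close>] onorm_diff_commute[of l])
    also have "onorm w * op_dist (\<sigma> k) l \<le> \<epsilon>"
    proof -
      have "onorm w * op_dist (\<sigma> k) l \<le> (onorm w + 1) * (\<epsilon> / (onorm w + 1))"
        using k w0 by (intro mult_mono) (auto simp: op_dist_def)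
      then show ?thesis using w0 by simp
    qed
    finally show "onorm (\<lambda>h. w (l h)) \<le> c + \<epsilon>" using \<sigma>(2)[OF w, of k] by linarith
  qed
  then show "l \<in> {a \<in> A. \<forall>w\<in>W. onorm (\<lambda>h. w (a h)) \<le> c}" using \<open>l \<in> A\<close> by blast
qed auto

lemma sublevel_contains_ball:
  assumes W: "\<And>w. w \<in> W \<Longrightarrow> bop w"
    and pointwise: "\<And>a. a \<in> A \<Longrightarrow> \<exists>M. \<forall>w\<in>W. onorm (\<lambda>h. w (a h)) \<le> M"
  shows "\<exists>c a0 r. r > 0 \<and> a0 \<in> A \<and> A_metric.mball a0 r \<subseteq> {a \<in> A. \<forall>w\<in>W. onorm (\<lambda>h. w (a h)) \<le> c}"
proof -
  define E where "E n = {a \<in> A. \<forall>w\<in>W. onorm (\<lambda>h. w (a h)) \<le> real n}" for n :: nat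
  have "\<Union>(range E) = A"
  proof
    show "A \<subseteq> \<Union>(range E)"
    proof
      fix a assume "a \<in> A"
      obtain M where M: "\<forall>w\<in>W. onorm (\<lambda>h. w (a h)) \<le> M" using pointwise[OF \<open>a \<in> A\<close>] by blast
      obtain n :: nat where "M \<le> real n" using real_arch_simple by blast
      then have "a \<in> E n" using \<open>a \<in> A\<close> M by (auto simp: E_def)
      then show "a \<in> \<Union>(range E)" by blast
    qed
  qed (auto simp: E_def)
  have closed: "closedin A_metric.mtopology (E n)" for n
    unfolding E_def by (rule closedin_onorm_sublevel[OF W])
  \<comment> \<open>Baire: the complete space \<open>A\<close> is not a countable union of closed sets with empty interior.\<close>
  obtain n where "A_metric.mtopology interior_of (E n) \<noteq> {}"
  proof (rule ccontr)
    assume "\<not> thesis"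
    then have "A_metric.mtopology interior_of \<Union>(range E) = {}"
      using that closed by (intro A_metric.metric_Baire_category_alt[OF A_mcomplete]) auto
    moreover have "A_metric.mtopology interior_of A = A"
      using interior_of_topspace[of A_metric.mtopology] by simp
    ultimately show False using \<open>\<Union>(range E) = A\<close> A_zero by simp
  qed
  then obtain a0 where a0i: "a0 \<in> A_metric.mtopology interior_of (E n)" by blast
  then have "\<exists>r>0. A_metric.mball a0 r \<subseteq> A_metric.mtopology interior_of (E n)"
    using openin_interior_of[of A_metric.mtopology "E n"] unfolding A_metric.openin_mtopology by blast
  then obtain r where "r > 0" and r: "A_metric.mball a0 r \<subseteq> A_metric.mtopology interior_of (E n)"
    by blast
  have "A_metric.mball a0 r \<subseteq> E n"
    using r interior_of_subset[of A_metric.mtopology "E n"] by (rule order_trans)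
  moreover have "a0 \<in> E n" using interior_of_subset[of A_metric.mtopology "E n"] a0i by (rule subsetD)
  ultimately show ?thesis using \<open>r > 0\<close> unfolding E_def by blast
qed

lemma uniform_bound_on_ball:
  assumes W: "\<And>w. w \<in> W \<Longrightarrow> bop w"
    and pointwise: "\<And>a. a \<in> A \<Longrightarrow> \<exists>M. \<forall>w\<in>W. onorm (\<lambda>h. w (a h)) \<le> M"
  shows "\<exists>r>0. \<exists>M. \<forall>w\<in>W. \<forall>a\<in>A. onorm a < r \<longrightarrow> onorm (\<lambda>h. w (a h)) \<le> M"
proof -
  obtain c a0 r where "r > 0" and a0: "a0 \<in> A"
    and ball: "A_metric.mball a0 r \<subseteq> {a \<in> A. \<forall>w\<in>W. onorm (\<lambda>h. w (a h)) \<le> c}"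
    using sublevel_contains_ball[OF W pointwise] by blast
  have bounded: "onorm (\<lambda>h. w (b h)) \<le> c" if "b \<in> A" "op_dist a0 b < r" "w \<in> W" for b w
    using ball that a0 by (auto simp: A_metric.in_mball)
  \<comment> \<open>Every small \<open>a\<close> is the difference of the two points \<open>a0 + a\<close> and \<open>a0\<close> of the ball.\<close>
  have "onorm (\<lambda>h. w (a h)) \<le> 2 * c" if w: "w \<in> W" and a: "a \<in> A" "onorm a < r" for w a
  proof -
    have sA: "(\<lambda>h. a0 h + a h) \<in> A" by (rule A_add[OF a0 a(1)])
    have "op_dist a0 (\<lambda>h. a0 h + a h) = onorm a"
      using onorm_neg[of a] by (simp add: op_dist_A[OF a0 sA])
    then have "onorm (\<lambda>h. w (a0 h + a h)) \<le> c" using bounded[OF sA _ w] a(2) by simp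
    moreover have "onorm (\<lambda>h. w (a0 h)) \<le> c"
      using bounded[OF a0 _ w] \<open>r > 0\<close> by (simp add: op_dist_A[OF a0 a0] onorm_zero)
    moreover have "(\<lambda>h. w (a h)) = (\<lambda>h. w (a0 h + a h) - w (a0 h))" by (simp add: bop_add_apply[OF W[OF w]])
    then have "onorm (\<lambda>h. w (a h)) \<le> onorm (\<lambda>h. w (a0 h + a h)) + onorm (\<lambda>h. w (a0 h))"
      using onorm_diff_le[OF bop_comp[OF W[OF w] bop_add[OF A_bop[OF a0] A_bop[OF a(1)]]]
          bop_comp[OF W[OF w] A_bop[OF a0]]] by simp
    ultimately show ?thesis by simp
  qed
  then show ?thesis using \<open>r > 0\<close> by blast
qed

lemma uniform_boundedness:
  assumes W: "\<And>w. w \<in> W \<Longrightarrow> bop w"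
    and pointwise: "\<And>a. a \<in> A \<Longrightarrow> \<exists>M. \<forall>w\<in>W. onorm (\<lambda>h. w (a h)) \<le> M"
  shows "\<exists>K. \<forall>w\<in>W. \<forall>a\<in>A. onorm (\<lambda>h. w (a h)) \<le> K * onorm a"
proof -
  obtain r M where "r > 0" and small: "\<And>w a. w \<in> W \<Longrightarrow> a \<in> A \<Longrightarrow> onorm a < r \<Longrightarrow> onorm (\<lambda>h. w (a h)) \<le> M"
    using uniform_bound_on_ball[OF W pointwise] by blast
  have "onorm (\<lambda>h. w (a h)) \<le> (2 * M / r) * onorm a" if w: "w \<in> W" and a: "a \<in> A" for w a
  proof (cases "onorm a = 0")
    case True
    then show ?thesis
      using onorm_eq_zero_iff[OF A_bop[OF a]] bop_zero_apply[OF W[OF w]] by (simp add: onorm_zero)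
  next
    case False
    then have na: "onorm a > 0" using bop_onorm_nonneg[OF A_bop[OF a]] by simp
    define c where "c = r / (2 * onorm a)"
    have "c > 0" using na \<open>r > 0\<close> by (simp add: c_def)
    have "onorm (\<lambda>h. c *\<^sub>R a h) = r / 2"
      using onorm_scaleR[OF bopD(1)[OF A_bop[OF a]], of c] \<open>c > 0\<close> \<open>r > 0\<close> na by (simp add: c_def)
    then have "onorm (\<lambda>h. w (c *\<^sub>R a h)) \<le> M"
      using small[OF w A_scaleR[OF a]] \<open>r > 0\<close> by simp
    moreover have "onorm (\<lambda>h. w (c *\<^sub>R a h)) = c * onorm (\<lambda>h. w (a h))"
      using onorm_scaleR[OF bopD(1)[OF bop_comp[OF W[OF w] A_bop[OF a]]], of c] \<open>c > 0\<close>
      by (simp add: bop_scaleR_apply[OF W[OF w]])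
    ultimately have "onorm (\<lambda>h. w (a h)) \<le> M / c" using \<open>c > 0\<close> by (simp add: pos_le_divide_eq mult.commute)
    also have "M / c = (2 * M / r) * onorm a" using na \<open>r > 0\<close> by (simp add: c_def field_simps)
    finally show ?thesis .
  qed
  then show ?thesis by blast
qed

end

section \<open>The canonical homomorphism from an enveloping algebra\<close>

locale multiplier_extension = multiplier_setting A le e U
  for A :: "('h::chilbert_space \<Rightarrow> 'h) set" and le :: "'i \<Rightarrow> 'i \<Rightarrow> bool" and e U +
  fixes \<iota> :: "('h \<Rightarrow> 'h) \<Rightarrow> 'b::cstar_algebra"
  assumes emb: "ideal_embedding A \<iota>"
begin

lemma \<iota>_inj: "a \<in> A \<Longrightarrow> b \<in> A \<Longrightarrow> \<iota> a = \<iota> b \<Longrightarrow> a = b"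
  using emb by (auto simp: ideal_embedding_def dest: inj_onD)

lemma \<iota>_add: "a \<in> A \<Longrightarrow> b \<in> A \<Longrightarrow> \<iota> (\<lambda>x. a x + b x) = \<iota> a + \<iota> b"
  using emb by (simp add: ideal_embedding_def)

lemma \<iota>_mul: "a \<in> A \<Longrightarrow> b \<in> A \<Longrightarrow> \<iota> (\<lambda>x. a (b x)) = \<iota> a * \<iota> b"
  using emb unfolding ideal_embedding_def comp_def by blast

lemma \<iota>_scale: "a \<in> A \<Longrightarrow> \<iota> (\<lambda>x. scaleC z (a x)) = scaleC z (\<iota> a)"
  using emb by (simp add: ideal_embedding_def)

lemma \<iota>_adj: "a \<in> A \<Longrightarrow> \<iota> (adj a) = cstar (\<iota> a)"
  using emb by (simp add: ideal_embedding_def)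

lemma \<iota>_idl: "a \<in> A \<Longrightarrow> y * \<iota> a \<in> \<iota> ` A" "a \<in> A \<Longrightarrow> \<iota> a * y \<in> \<iota> ` A"
  using emb by (simp_all add: ideal_embedding_def)

lemma \<iota>_diff: "a \<in> A \<Longrightarrow> b \<in> A \<Longrightarrow> \<iota> (\<lambda>x. a x - b x) = \<iota> a - \<iota> b"
  using \<iota>_add[of a "\<lambda>x. scaleC (-1) (b x)"] \<iota>_scale[of b "-1"] A_scaleC[of b "-1"] by simp

definition lmult :: "'b \<Rightarrow> ('h \<Rightarrow> 'h) \<Rightarrow> ('h \<Rightarrow> 'h)" where
  "lmult b a = inv_into A \<iota> (b * \<iota> a)"

definition rmult :: "'b \<Rightarrow> ('h \<Rightarrow> 'h) \<Rightarrow> ('h \<Rightarrow> 'h)" where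
  "rmult b a = inv_into A \<iota> (\<iota> a * b)"

lemma lmult_A: assumes "a \<in> A" shows "lmult b a \<in> A" "\<iota> (lmult b a) = b * \<iota> a"
  unfolding lmult_def using \<iota>_idl(1)[OF assms, of b] by (simp_all add: inv_into_into f_inv_into_f)

lemma rmult_A: assumes "a \<in> A" shows "rmult b a \<in> A" "\<iota> (rmult b a) = \<iota> a * b"
  unfolding rmult_def using \<iota>_idl(2)[OF assms, of b] by (simp_all add: inv_into_into f_inv_into_f)

lemma lmult_comp: assumes "a \<in> A" "a' \<in> A" shows "lmult b (\<lambda>x. a (a' x)) = (\<lambda>x. lmult b a (a' x))"
proof (rule \<iota>_inj)
  show "lmult b (\<lambda>x. a (a' x)) \<in> A" by (rule lmult_A(1)[OF A_comp[OF assms]])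
  show "(\<lambda>x. lmult b a (a' x)) \<in> A" by (rule A_comp[OF lmult_A(1)[OF assms(1)] assms(2)])
  show "\<iota> (lmult b (\<lambda>x. a (a' x))) = \<iota> (\<lambda>x. lmult b a (a' x))"
    by (simp add: lmult_A(2)[OF A_comp[OF assms]] \<iota>_mul[OF assms] \<iota>_mul[OF lmult_A(1)[OF assms(1)] assms(2)] lmult_A(2)[OF assms(1)] mult.assoc)
qed

lemma comp_lmult: assumes "x \<in> A" "a \<in> A" shows "(\<lambda>h. x (lmult b a h)) = (\<lambda>h. rmult b x (a h))"
proof (rule \<iota>_inj)
  show "(\<lambda>h. x (lmult b a h)) \<in> A" by (rule A_comp[OF assms(1) lmult_A(1)[OF assms(2)]])
  show "(\<lambda>h. rmult b x (a h)) \<in> A" by (rule A_comp[OF rmult_A(1)[OF assms(1)] assms(2)])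
  show "\<iota> (\<lambda>h. x (lmult b a h)) = \<iota> (\<lambda>h. rmult b x (a h))"
    by (simp add: \<iota>_mul[OF assms(1) lmult_A(1)[OF assms(2)]] \<iota>_mul[OF rmult_A(1)[OF assms(1)] assms(2)]
        lmult_A(2)[OF assms(2)] rmult_A(2)[OF assms(1)] mult.assoc)
qed

lemma lmult_diff: assumes "a \<in> A" "a' \<in> A" shows "lmult b (\<lambda>x. a x - a' x) = (\<lambda>x. lmult b a x - lmult b a' x)"
proof (rule \<iota>_inj)
  show "lmult b (\<lambda>x. a x - a' x) \<in> A" by (rule lmult_A(1)[OF A_diff[OF assms]])
  show "(\<lambda>x. lmult b a x - lmult b a' x) \<in> A" by (rule A_diff[OF lmult_A(1)[OF assms(1)] lmult_A(1)[OF assms(2)]])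
  show "\<iota> (lmult b (\<lambda>x. a x - a' x)) = \<iota> (\<lambda>x. lmult b a x - lmult b a' x)"
    by (simp add: lmult_A(2)[OF A_diff[OF assms]] \<iota>_diff[OF assms] \<iota>_diff[OF lmult_A(1)[OF assms(1)] lmult_A(1)[OF assms(2)]]
        lmult_A(2)[OF assms(1)] lmult_A(2)[OF assms(2)] right_diff_distrib)
qed

lemma lmult_add: assumes "a \<in> A" shows "lmult (b + b') a = (\<lambda>x. lmult b a x + lmult b' a x)"
proof (rule \<iota>_inj)
  show "lmult (b + b') a \<in> A" by (rule lmult_A(1)[OF assms])
  show "(\<lambda>x. lmult b a x + lmult b' a x) \<in> A" by (rule A_add[OF lmult_A(1)[OF assms] lmult_A(1)[OF assms]])
  show "\<iota> (lmult (b + b') a) = \<iota> (\<lambda>x. lmult b a x + lmult b' a x)"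
    by (simp add: lmult_A(2)[OF assms] \<iota>_add[OF lmult_A(1)[OF assms] lmult_A(1)[OF assms]] distrib_right)
qed

lemma lmult_mult: assumes "a \<in> A" shows "lmult (b * b') a = lmult b (lmult b' a)"
proof (rule \<iota>_inj)
  show "lmult (b * b') a \<in> A" by (rule lmult_A(1)[OF assms])
  show "lmult b (lmult b' a) \<in> A" by (rule lmult_A(1)[OF lmult_A(1)[OF assms]])
  show "\<iota> (lmult (b * b') a) = \<iota> (lmult b (lmult b' a))"
    by (simp add: lmult_A(2)[OF assms] lmult_A(2)[OF lmult_A(1)[OF assms]] mult.assoc)
qed

lemma lmult_scaleC: assumes "a \<in> A" shows "lmult (scaleC z b) a = (\<lambda>x. scaleC z (lmult b a x))"
proof (rule \<iota>_inj)
  show "lmult (scaleC z b) a \<in> A" by (rule lmult_A(1)[OF assms])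
  show "(\<lambda>x. scaleC z (lmult b a x)) \<in> A" by (rule A_scaleC[OF lmult_A(1)[OF assms]])
  show "\<iota> (lmult (scaleC z b) a) = \<iota> (\<lambda>x. scaleC z (lmult b a x))"
    by (simp add: lmult_A(2)[OF assms] \<iota>_scale[OF lmult_A(1)[OF assms]] scaleC_mult_left)
qed

lemma lmult_\<iota>: assumes "x \<in> A" "a \<in> A" shows "lmult (\<iota> x) a = (\<lambda>h. x (a h))"
proof (rule \<iota>_inj)
  show "lmult (\<iota> x) a \<in> A" by (rule lmult_A(1)[OF assms(2)])
  show "(\<lambda>h. x (a h)) \<in> A" by (rule A_comp[OF assms])
  show "\<iota> (lmult (\<iota> x) a) = \<iota> (\<lambda>h. x (a h))"
    by (simp add: lmult_A(2)[OF assms(2)] \<iota>_mul[OF assms])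
qed

lemma adj_rmult: assumes "a \<in> A" shows "adj (rmult b a) = lmult (cstar b) (adj a)"
proof (rule \<iota>_inj)
  show "adj (rmult b a) \<in> A" by (rule A_adj[OF rmult_A(1)[OF assms]])
  show "lmult (cstar b) (adj a) \<in> A" by (rule lmult_A(1)[OF A_adj[OF assms]])
  show "\<iota> (adj (rmult b a)) = \<iota> (lmult (cstar b) (adj a))"
    by (simp add: \<iota>_adj[OF rmult_A(1)[OF assms]] rmult_A(2)[OF assms] lmult_A(2)[OF A_adj[OF assms]] \<iota>_adj[OF assms] cstar_mult)
qed

lemma lmult_bounded: "\<exists>K\<ge>0. \<forall>a\<in>A. onorm (lmult b a) \<le> K * onorm a"
proof -
  define W where "W = {rmult b x |x. x \<in> A \<and> onorm x \<le> 1}"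
  have W: "bop w" if "w \<in> W" for w using that rmult_A(1) A_bop by (auto simp: W_def)
  \<comment> \<open>Pointwise boundedness of \<open>W\<close> comes from \<open>x \<circ> lmult b a = rmult b x \<circ> a\<close>.\<close>
  have pointwise: "\<exists>M. \<forall>w\<in>W. onorm (\<lambda>h. w (a h)) \<le> M" if a: "a \<in> A" for a
  proof (intro exI ballI)
    fix w assume "w \<in> W"
    then obtain x where x: "x \<in> A" "onorm x \<le> 1" "w = rmult b x" by (auto simp: W_def)
    have "onorm (\<lambda>h. w (a h)) = onorm (\<lambda>h. x (lmult b a h))" using comp_lmult[OF x(1) a] x(3) by simp
    also have "\<dots> \<le> onorm x * onorm (lmult b a)"
      by (rule onorm_comp_le[OF A_bop[OF x(1)] A_bop[OF lmult_A(1)[OF a]]])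
    also have "\<dots> \<le> onorm (lmult b a)"
      using mult_right_mono[OF x(2) bop_onorm_nonneg[OF A_bop[OF lmult_A(1)[OF a]]]] by simp
    finally show "onorm (\<lambda>h. w (a h)) \<le> onorm (lmult b a)" .
  qed
  obtain K0 where K0: "\<And>w a. w \<in> W \<Longrightarrow> a \<in> A \<Longrightarrow> onorm (\<lambda>h. w (a h)) \<le> K0 * onorm a"
    using uniform_boundedness[OF W pointwise] by blast
  obtain C where C: "C > 0" "\<And>i. onorm (e i) \<le> C" using e_bound_pos by blast
  have bound: "onorm (lmult b a) \<le> C * K0 * onorm a" if a: "a \<in> A" for a
  proof (rule onorm_le_of_approx_unit[OF lmult_A(1)[OF a]])
    fix i
    define x where "x = (\<lambda>h. (1 / C) *\<^sub>R e i h)"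
    have xA: "x \<in> A" unfolding x_def by (rule A_scaleR[OF e_in_A])
    have "onorm x = onorm (e i) / C"
      unfolding x_def using onorm_scaleR[OF bopD(1)[OF A_bop[OF e_in_A]], of "1 / C" i] C(1) by simp
    also have "\<dots> \<le> 1" using C by simp
    finally have "rmult b x \<in> W" using xA by (auto simp: W_def)
    then have "onorm (\<lambda>h. x (lmult b a h)) \<le> K0 * onorm a"
      using K0[OF _ a] comp_lmult[OF xA a] by simp
    moreover have "onorm (\<lambda>h. x (lmult b a h)) = onorm (\<lambda>h. e i (lmult b a h)) / C"
      unfolding x_def using onorm_scaleR[OF bopD(1)[OF bop_comp[OF A_bop[OF e_in_A] A_bop[OF lmult_A(1)[OF a]]]],
          of "1 / C"] C(1) by simp
    ultimately show "onorm (\<lambda>h. e i (lmult b a h)) \<le> C * K0 * onorm a"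
      using C(1) by (simp add: field_simps)
  qed
  have "onorm (lmult b a) \<le> max 0 (C * K0) * onorm a" if "a \<in> A" for a
    using bound[OF that] mult_right_mono[of "C * K0" "max 0 (C * K0)" "onorm a"]
      bop_onorm_nonneg[OF A_bop[OF that]] by simp
  then show ?thesis by (intro exI[of _ "max 0 (C * K0)"]) simp
qed

lemma lmult_approx_unit_tendsto:
  assumes a: "a \<in> A"
  shows "((\<lambda>i. lmult b (e i) (a h)) \<longlongrightarrow> lmult b a h) U"
proof -
  obtain K where K: "\<And>a. a \<in> A \<Longrightarrow> onorm (lmult b a) \<le> K * onorm a" using lmult_bounded by blast
  have eq: "(\<lambda>h. lmult b (e i) (a h) - lmult b a h) = lmult b (\<lambda>h. e i (a h) - a h)" for i
    using lmult_diff[OF A_comp[OF e_in_A a] a] lmult_comp[OF e_in_A a] by simp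
  have "((\<lambda>i. lmult b (e i) (a h) - lmult b a h) \<longlongrightarrow> 0) U"
  proof (rule Lim_null_comparison)
    show "eventually (\<lambda>i. norm (lmult b (e i) (a h) - lmult b a h) \<le> K * onorm (\<lambda>h. e i (a h) - a h) * norm h) U"
    proof (rule always_eventually, rule allI)
      fix i
      let ?d = "\<lambda>h. e i (a h) - a h"
      have d: "?d \<in> A" by (rule A_diff[OF A_comp[OF e_in_A a] a])
      have "norm (lmult b (e i) (a h) - lmult b a h) = norm (lmult b ?d h)"
        using fun_cong[OF eq[of i], of h] by simp
      also have "\<dots> \<le> onorm (lmult b ?d) * norm h" by (rule bop_norm[OF A_bop[OF lmult_A(1)[OF d]]])
      also have "\<dots> \<le> K * onorm ?d * norm h" by (rule mult_right_mono[OF K[OF d] norm_ge_zero])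
      finally show "norm (lmult b (e i) (a h) - lmult b a h) \<le> K * onorm ?d * norm h" .
    qed
    show "((\<lambda>i. K * onorm (\<lambda>h. e i (a h) - a h) * norm h) \<longlongrightarrow> 0) U"
      by (intro tendsto_mult_left_zero tendsto_mult_right_zero approx_unit_tendsto(1)[OF a])
  qed
  then show ?thesis by (simp add: LIM_zero_iff)
qed

text \<open>\<open>strict_class (mult_op b)\<close> is the class of the family \<open>(b e\<^sub>i)\<close>, i.e. the paper's \<open>\<phi>(b)\<close>.\<close>

definition mult_op :: "'b \<Rightarrow> 'h \<Rightarrow> 'h" where
  "mult_op b v = Lim U (\<lambda>i. lmult b (e i) v)"

lemma mult_op: "bop (mult_op b)" "((\<lambda>i. lmult b (e i) v) \<longlongrightarrow> mult_op b v) U"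
proof -
  obtain K where K: "K \<ge> 0" "\<And>a. a \<in> A \<Longrightarrow> onorm (lmult b a) \<le> K * onorm a"
    using lmult_bounded by blast
  obtain C where C: "C > 0" "\<And>i. onorm (e i) \<le> C" using e_bound_pos by blast
  have "onorm (lmult b (e i)) \<le> K * C" for i
    using order_trans[OF K(2)[OF e_in_A] mult_left_mono[OF C(2) K(1)]] .
  then obtain T where T: "bop T" "\<And>v. ((\<lambda>i. lmult b (e i) v) \<longlongrightarrow> T v) U"
    using bounded_net_tendsto_apply[of "\<lambda>i. lmult b (e i)" "K * C"] A_bop[OF lmult_A(1)[OF e_in_A]]
      lmult_approx_unit_tendsto by blast
  then have "mult_op b = T"
    unfolding mult_op_def using tendsto_Lim[OF U_nontrivial] tendsto_unique[OF U_neq_bot] by blast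
  then show "bop (mult_op b)" "((\<lambda>i. lmult b (e i) v) \<longlongrightarrow> mult_op b v) U" using T by simp_all
qed

lemma mult_op_comp: "a \<in> A \<Longrightarrow> mult_op b (a h) = lmult b a h"
  by (rule tendsto_unique[OF U_neq_bot mult_op(2) lmult_approx_unit_tendsto])

lemma mult_op_unique:
  assumes "bop S" "\<And>a. a \<in> A \<Longrightarrow> (\<lambda>h. S (a h)) = lmult b a"
  shows "S = mult_op b"
  by (rule nondegenerate_eqI[OF assms(1) mult_op(1)]) (simp add: assms(2) mult_op_comp)

lemma comp_mult_op: assumes x: "x \<in> A" shows "(\<lambda>h. x (mult_op b h)) = rmult b x"
proof (rule nondegenerate_eqI[OF bop_comp[OF A_bop[OF x] mult_op(1)] A_bop[OF rmult_A(1)[OF x]]])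
  fix a assume a: "a \<in> A"
  show "(\<lambda>h. x (mult_op b (a h))) = (\<lambda>h. rmult b x (a h))"
    using comp_lmult[OF x a] by (simp add: mult_op_comp[OF a])
qed

lemma strict_limit_mult_op: "strict_limit (\<lambda>i. lmult b (e i)) (mult_op b)"
proof -
  obtain K where K: "K \<ge> 0" "\<And>a. a \<in> A \<Longrightarrow> onorm (lmult b a) \<le> K * onorm a"
    using lmult_bounded by blast
  obtain C where C: "C > 0" "\<And>i. onorm (e i) \<le> C" using e_bound_pos by blast
  have "onorm (lmult b (e i)) \<le> K * C" for i
    using order_trans[OF K(2)[OF e_in_A] mult_left_mono[OF C(2) K(1)]] .
  then have "bfam A (\<lambda>i. lmult b (e i))" using lmult_A(1)[OF e_in_A] by (auto simp: bfam_def)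
  moreover have "strict_tendsto (\<lambda>i. lmult b (e i)) (mult_op b)"
    unfolding strict_tendsto_def
  proof (intro ballI conjI)
    fix x assume x: "x \<in> A"
    show "((\<lambda>i. onorm (\<lambda>h. lmult b (e i) (x h) - mult_op b (x h))) \<longlongrightarrow> 0) U"
    proof (rule tendsto_0_le)
      fix i
      have eq: "(\<lambda>h. lmult b (e i) (x h) - mult_op b (x h)) = lmult b (\<lambda>h. e i (x h) - x h)"
        using lmult_diff[OF A_comp[OF e_in_A x] x] lmult_comp[OF e_in_A x] by (simp add: mult_op_comp[OF x])
      show "onorm (\<lambda>h. lmult b (e i) (x h) - mult_op b (x h)) \<le> K * onorm (\<lambda>h. e i (x h) - x h)"
        unfolding eq by (rule K(2)[OF A_diff[OF A_comp[OF e_in_A x] x]])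
      show "0 \<le> onorm (\<lambda>h. lmult b (e i) (x h) - mult_op b (x h))"
        by (rule bop_onorm_nonneg[OF bop_comp_diff_right[OF A_bop[OF lmult_A(1)[OF e_in_A]] mult_op(1) A_bop[OF x]]])
    next
      show "((\<lambda>i. K * onorm (\<lambda>h. e i (x h) - x h)) \<longlongrightarrow> 0) U"
        by (intro tendsto_mult_right_zero approx_unit_tendsto(1)[OF x])
    qed
    have "(\<lambda>h. x (lmult b (e i) h) - x (mult_op b h)) = (\<lambda>h. rmult b x (e i h) - rmult b x h)" for i
      using comp_lmult[OF x e_in_A, of b i] comp_mult_op[OF x, of b] by (metis (no_types, lifting))
    then show "((\<lambda>i. onorm (\<lambda>h. x (lmult b (e i) h) - x (mult_op b h))) \<longlongrightarrow> 0) U"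
      using approx_unit_tendsto(2)[OF rmult_A(1)[OF x]] by simp
  qed
  ultimately show ?thesis by (simp add: strict_limit_def mult_op(1))
qed

lemma mult_op_multipliers: "mult_op b \<in> multipliers"
  by (rule multipliersI[OF strict_limit_mult_op])

lemma mult_op_add: "mult_op (x + y) = (\<lambda>h. mult_op x h + mult_op y h)"
  by (rule mult_op_unique[OF bop_add[OF mult_op(1) mult_op(1)], symmetric])
     (simp add: mult_op_comp lmult_add)

lemma mult_op_mult: "mult_op (x * y) = (\<lambda>h. mult_op x (mult_op y h))"
  by (rule mult_op_unique[OF bop_comp[OF mult_op(1) mult_op(1)], symmetric])
     (simp add: mult_op_comp lmult_A(1) lmult_mult)

lemma mult_op_scaleC: "mult_op (scaleC z x) = (\<lambda>h. scaleC z (mult_op x h))"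
  by (rule mult_op_unique[OF bop_scaleC[OF mult_op(1)], symmetric]) (simp add: mult_op_comp lmult_scaleC)

lemma mult_op_cstar: "mult_op (cstar x) = adj (mult_op x)"
proof (rule mult_op_unique[OF adj_bop[OF mult_op(1)], symmetric])
  fix a assume a: "a \<in> A"
  have "(\<lambda>h. adj (mult_op x) (a h)) = adj (\<lambda>h. adj a (mult_op x h))"
    using adj_comp[OF A_bop[OF A_adj[OF a]] mult_op(1)] adj_adj[OF A_bop[OF a]] by simp
  also have "(\<lambda>h. adj a (mult_op x h)) = rmult x (adj a)" by (rule comp_mult_op[OF A_adj[OF a]])
  also have "adj (rmult x (adj a)) = lmult (cstar x) a"
    using adj_rmult[OF A_adj[OF a]] adj_adj[OF A_bop[OF a]] by simp
  finally show "(\<lambda>h. adj (mult_op x) (a h)) = lmult (cstar x) a" .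
qed

lemma mult_op_\<iota>: "a \<in> A \<Longrightarrow> mult_op (\<iota> a) = a"
  by (rule mult_op_unique[OF A_bop, symmetric]) (simp_all add: lmult_\<iota>)

lemma qclass_lmult_approx_unit:
  "qclass A U (\<lambda>i. inv_into A \<iota> (b * \<iota> (e i))) = strict_class (mult_op b)"
  using qclass_eq_strict_class[OF strict_limit_mult_op[of b]] by (simp add: lmult_def)

lemma qhom_canonical: "qhom A U (\<lambda>b. qclass A U (\<lambda>i. inv_into A \<iota> (b * \<iota> (e i))))"
  unfolding qhom_def qclass_lmult_approx_unit
  using mult_op_multipliers
  by (simp add: Q_eq qadd_eq(1) qmul_eq(1) qscale_eq(1) qstar_eq(1)
      mult_op_add mult_op_mult mult_op_scaleC mult_op_cstar)

lemma qhom_canonical_extends: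
  "a \<in> A \<Longrightarrow> qclass A U (\<lambda>i. inv_into A \<iota> (\<iota> a * \<iota> (e i))) = qconst A U a"
  by (simp add: qclass_lmult_approx_unit mult_op_\<iota> qconst_eq)

lemma qhom_unique:
  assumes h: "qhom A U \<phi>" and c: "\<forall>a\<in>A. \<phi> (\<iota> a) = qconst A U a"
  shows "\<phi> = (\<lambda>b. qclass A U (\<lambda>i. inv_into A \<iota> (b * \<iota> (e i))))"
proof
  fix b
  have "\<phi> b \<in> Q A U" using h by (simp add: qhom_def)
  then obtain S where S: "S \<in> multipliers" "\<phi> b = strict_class S" by (auto simp: Q_eq)
  have "S = mult_op b"
  proof (rule mult_op_unique[OF multipliers_bop[OF S(1)]])
    fix a assume a: "a \<in> A"
    have "strict_class (\<lambda>h. S (a h)) = qmul A U (\<phi> b) (\<phi> (\<iota> a))"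
      using qmul_eq(1)[OF S(1) A_subset_multipliers[OF a]] S(2) c a qconst_eq[OF a] by simp
    also have "\<dots> = \<phi> (\<iota> (lmult b a))" using h by (simp add: qhom_def lmult_A(2)[OF a])
    also have "\<dots> = strict_class (lmult b a)" using c lmult_A(1)[OF a] qconst_eq by simp
    finally show "(\<lambda>h. S (a h)) = lmult b a"
      by (rule strict_class_inj[OF qmul_eq(2)[OF S(1) A_subset_multipliers[OF a]]])
  qed
  then show "\<phi> b = qclass A U (\<lambda>i. inv_into A \<iota> (b * \<iota> (e i)))"
    using S(2) by (simp add: qclass_lmult_approx_unit)
qed

end

theorem theorem2p6:
  fixes A :: "('h::chilbert_space \<Rightarrow> 'h) set"
    and le :: "'i \<Rightarrow> 'i \<Rightarrow> bool"
    and e :: "'i \<Rightarrow> 'h \<Rightarrow> 'h"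
    and U :: "'i filter"
  assumes "cstar_subalg A"
    and "nondegenerate A"
    and "directed le"
    and "approx_unit A le e"
    and "\<exists>C. \<forall>i. onorm (e i) \<le> C"
    and "ultrafilter U"
    and "cofinal le U"
  shows "q_essential_ideal A U (qconst A U ` A) \<and>
    (\<forall>\<iota> :: ('h \<Rightarrow> 'h) \<Rightarrow> 'b::cstar_algebra. ideal_embedding A \<iota> \<longrightarrow>
       (\<exists>!\<phi>. qhom A U \<phi> \<and> (\<forall>a\<in>A. \<phi> (\<iota> a) = qconst A U a)) \<and>
       (let \<phi>0 = (\<lambda>b. qclass A U (\<lambda>i. inv_into A \<iota> (b * \<iota> (e i)))) in
          qhom A U \<phi>0 \<and> (\<forall>a\<in>A. \<phi>0 (\<iota> a) = qconst A U a)))"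
proof -
  have setting: "multiplier_setting A le e U"
    using assms by (simp add: multiplier_setting_def)
  interpret multiplier_setting A le e U by (rule setting)
  show ?thesis
  proof (intro conjI allI impI)
    show "q_essential_ideal A U (qconst A U ` A)" by (rule q_essential_ideal_A)
  next
    fix \<iota> :: "('h \<Rightarrow> 'h) \<Rightarrow> 'b::cstar_algebra"
    assume "ideal_embedding A \<iota>"
    then interpret multiplier_extension A le e U \<iota>
      by (intro multiplier_extension.intro setting) (simp add: multiplier_extension_axioms_def)
    show "\<exists>!\<phi>. qhom A U \<phi> \<and> (\<forall>a\<in>A. \<phi> (\<iota> a) = qconst A U a)"
      by (rule ex1I[of _ "\<lambda>b. qclass A U (\<lambda>i. inv_into A \<iota> (b * \<iota> (e i)))"])
         (simp_all add: qhom_canonical qhom_canonical_extends qhom_unique)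
    show "let \<phi>0 = (\<lambda>b. qclass A U (\<lambda>i. inv_into A \<iota> (b * \<iota> (e i)))) in
        qhom A U \<phi>0 \<and> (\<forall>a\<in>A. \<phi>0 (\<iota> a) = qconst A U a)"
      by (simp add: qhom_canonical qhom_canonical_extends)
  qed
qed

end
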